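(* Let $\gamma(t,s)$ be a smooth solution of $\gamma_t=\gamma_s\times\gamma_{ss}$ in $\mathrm{Im}(\mathbb O)$ with $|\gamma_s|=1$, $k_1>0$, $\kappa_2>0$ everywhere, and suppose $\varphi_3=0$ and $\varphi_2\neq0$. Then the coefficients of the second fundamental form of the surface $\Sigma$ swept by $\gamma$ with respect to the frame $\tilde E_1,\dots,\tilde E_7$ satisfy $\tilde h^6_{ij}=\tilde h^7_{ij}=0$ for all $i,j\in\{1,2\}$; that is, the normal bundle of $\Sigma$ is flat in the directions $\tilde E_6,\tilde E_7$.
   Context: $\mathbb O$: octonions (product $(a+bl)(c+dl)=(ac-d\bar b)+(\bar a d+cb)l$ for quaternions), $\langle x,y\rangle=\frac12(\bar xy+\bar yx)$, $\mathrm{Im}(\mathbb O)\cong\mathbb R^7$, $x\times y=\frac12(\bar yx-\bar xy)$. For each $t$ (with $s$ in an interval containing $0$): $I_4=\gamma_s$, $k_1=\|\gamma_{ss}\|$, $I_1=I_{4s}/k_1$, $I_5=I_1\times I_4$, $\kappa_2=\sqrt{\|I_{1s}\|^2-\langle I_{1s},I_4\rangle^2-\langle I_{1s},I_5\rangle^2}$, $I_2=\kappa_2^{-1}(I_{1s}-\langle I_{1s},I_4\rangle I_4-\langle I_{1s},I_5\rangle I_5)$, $I_3=I_1\times I_2$, $I_6=I_2\times I_4$, $I_7=I_3\times I_4$; $\rho_1=\langle I_{1s},I_5\rangle$, $\rho_2=\langle I_{2s},I_6\rangle$, $\alpha=\langle I_{2s},I_3\rangle$, $\beta_1=\langle I_{2s},I_7\rangle$,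 $\beta_2=\langle I_{3s},I_6\rangle$; $r=\frac1{\sqrt2}e^{-\sqrt{-1}\int_0^s\rho_1}$, $q=\frac1{\sqrt2}e^{-\sqrt{-1}\int_0^s\rho_2}$; $\varphi_1=k_1\overline r$, $\varphi_2=2\kappa_2r\overline q$, $\varphi_3=-\sqrt2q^2r[2\alpha+\sqrt{-1}(\beta_1+\beta_2)]$. Frame of $\Sigma$: $E_1=\gamma_s=I_4$, $E_2=\gamma_t/k_1=-I_5$, $E_3=I_1$, $E_4=I_2$, $E_5=I_6$, $E_6=I_3$, $E_7=I_7$, coframe $\omega^1=ds$, $\omega^2=\sqrt2|\varphi_1|dt$; for an orthonormal frame $(F_i)$ with $F_1=E_1$, $F_2=E_2$, coefficients $h^\alpha_{ij}$ are defined by $dF_i=\sum_{k\le2}\omega_i^kF_k+\sum_{\alpha\ge3}\omega_i^\alpha F_\alpha$, $\omega_i^\alpha=\sum_jh^\alpha_{ij}\omega^j$. Let $h^\alpha_{ij}$ be these for $F=E$, set $\theta=\arccos\frac{h^4_{22}}{\sqrt{(h^4_{22})^2+\frac94|\varphi_2|^2}}$, $\tilde E_i=E_i$ for $i\neq4,7$, $\tilde E_4=\cos\theta E_4-\sin\theta E_7$, $\tilde E_7=\sin\theta E_4+\cos\theta E_7$, and let $\tilde h^\alpha_{ij}$ be the coefficients for $F=\tilde E$. *)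

theory Defs
  imports "HOL-Analysis.Analysis"
begin

text \<open>A quaternion a0 + a1 i + a2 j + a3 k is the 4-tuple (a0,a1,a2,a3);
an octonion a + b l (a, b quaternions) is the pair (a,b).  Both carry the
Euclidean real normed vector structure of product types, so derivatives
of octonion-valued maps are the usual ones.\<close>

type_synonym quat = "real \<times> real \<times> real \<times> real"
type_synonym oct = "quat \<times> quat"

fun qmult :: "quat \<Rightarrow> quat \<Rightarrow> quat" where
  "qmult (a0,a1,a2,a3) (b0,b1,b2,b3) =
     (a0*b0 - a1*b1 - a2*b2 - a3*b3,
      a0*b1 + a1*b0 + a2*b3 - a3*b2,
      a0*b2 - a1*b3 + a2*b0 + a3*b1,
      a0*b3 + a1*b2 - a2*b1 + a3*b0)"

fun qconj :: "quat \<Rightarrow> quat" where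
  "qconj (a0,a1,a2,a3) = (a0, -a1, -a2, -a3)"

fun omult :: "oct \<Rightarrow> oct \<Rightarrow> oct" where
  "omult (a,b) (c,d) = (qmult a c - qmult d (qconj b), qmult (qconj a) d + qmult c b)"

fun oconj :: "oct \<Rightarrow> oct" where
  "oconj (a,b) = (qconj a, - b)"

definition ore :: "oct \<Rightarrow> real" where
  "ore x = fst (fst x)"

definition ofreal :: "real \<Rightarrow> oct" where
  "ofreal c = ((c,0,0,0), 0)"

definition ImO :: "oct set" where
  "ImO = {x. ore x = 0}"

text \<open><x,y> = (conj(x) y + conj(y) x)/2, which is a real octonion; we take that real.\<close>
definition oinner :: "oct \<Rightarrow> oct \<Rightarrow> real" where
  "oinner x y = ore ((1/2) *\<^sub>R (omult (oconj x) y + omult (oconj y) x))"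

definition onorm :: "oct \<Rightarrow> real" where
  "onorm x = sqrt (oinner x x)"

definition ocross :: "oct \<Rightarrow> oct \<Rightarrow> oct" where
  "ocross x y = (1/2) *\<^sub>R (omult (oconj y) x - omult (oconj x) y)"

definition ps :: "(real \<Rightarrow> real \<Rightarrow> oct) \<Rightarrow> real \<Rightarrow> real \<Rightarrow> oct" where
  "ps f t s = vector_derivative (\<lambda>\<sigma>. f t \<sigma>) (at s)"

definition pt :: "(real \<Rightarrow> real \<Rightarrow> oct) \<Rightarrow> real \<Rightarrow> real \<Rightarrow> oct" where
  "pt f t s = vector_derivative (\<lambda>\<tau>. f \<tau> s) (at t)"

text \<open>Iterated partial derivative; True = d/ds, False = d/dt.\<close>
fun pd :: "bool list \<Rightarrow> (real \<Rightarrow> real \<Rightarrow> oct) \<Rightarrow> real \<Rightarrow> real \<Rightarrow> oct" where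
  "pd [] f = f"
| "pd (b # bs) f = (if b then ps (pd bs f) else pt (pd bs f))"

definition smooth2_on :: "(real \<times> real) set \<Rightarrow> (real \<Rightarrow> real \<Rightarrow> oct) \<Rightarrow> bool" where
  "smooth2_on D f \<longleftrightarrow>
     (\<forall>ws. continuous_on D (\<lambda>(t,s). pd ws f t s) \<and>
       (\<forall>(t,s)\<in>D.
          ((\<lambda>\<sigma>. pd ws f t \<sigma>) has_vector_derivative ps (pd ws f) t s) (at s) \<and>
          ((\<lambda>\<tau>. pd ws f \<tau> s) has_vector_derivative pt (pd ws f) t s) (at t)))"

definition sint :: "(real \<Rightarrow> real) \<Rightarrow> real \<Rightarrow> real" where
  "sint f s = (if 0 \<le> s then integral {0..s} f else - integral {s..0} f)"

definition I4 :: "(real \<Rightarrow> real \<Rightarrow> oct) \<Rightarrow> real \<Rightarrow> real \<Rightarrow> oct" where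
  "I4 g = ps g"

definition k1 :: "(real \<Rightarrow> real \<Rightarrow> oct) \<Rightarrow> real \<Rightarrow> real \<Rightarrow> real" where
  "k1 g t s = onorm (ps (ps g) t s)"

definition I1 :: "(real \<Rightarrow> real \<Rightarrow> oct) \<Rightarrow> real \<Rightarrow> real \<Rightarrow> oct" where
  "I1 g t s = (1 / k1 g t s) *\<^sub>R ps (I4 g) t s"

definition I5 :: "(real \<Rightarrow> real \<Rightarrow> oct) \<Rightarrow> real \<Rightarrow> real \<Rightarrow> oct" where
  "I5 g t s = ocross (I1 g t s) (I4 g t s)"

definition kappa2 :: "(real \<Rightarrow> real \<Rightarrow> oct) \<Rightarrow> real \<Rightarrow> real \<Rightarrow> real" where
  "kappa2 g t s = sqrt ((onorm (ps (I1 g) t s))\<^sup>2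
      - (oinner (ps (I1 g) t s) (I4 g t s))\<^sup>2 - (oinner (ps (I1 g) t s) (I5 g t s))\<^sup>2)"

definition I2 :: "(real \<Rightarrow> real \<Rightarrow> oct) \<Rightarrow> real \<Rightarrow> real \<Rightarrow> oct" where
  "I2 g t s = (1 / kappa2 g t s) *\<^sub>R
      (ps (I1 g) t s - oinner (ps (I1 g) t s) (I4 g t s) *\<^sub>R I4 g t s
                     - oinner (ps (I1 g) t s) (I5 g t s) *\<^sub>R I5 g t s)"

definition I3 :: "(real \<Rightarrow> real \<Rightarrow> oct) \<Rightarrow> real \<Rightarrow> real \<Rightarrow> oct" where
  "I3 g t s = ocross (I1 g t s) (I2 g t s)"

definition I6 :: "(real \<Rightarrow> real \<Rightarrow> oct) \<Rightarrow> real \<Rightarrow> real \<Rightarrow> oct" where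
  "I6 g t s = ocross (I2 g t s) (I4 g t s)"

definition I7 :: "(real \<Rightarrow> real \<Rightarrow> oct) \<Rightarrow> real \<Rightarrow> real \<Rightarrow> oct" where
  "I7 g t s = ocross (I3 g t s) (I4 g t s)"

definition rho1 :: "(real \<Rightarrow> real \<Rightarrow> oct) \<Rightarrow> real \<Rightarrow> real \<Rightarrow> real" where
  "rho1 g t s = oinner (ps (I1 g) t s) (I5 g t s)"

definition rho2 :: "(real \<Rightarrow> real \<Rightarrow> oct) \<Rightarrow> real \<Rightarrow> real \<Rightarrow> real" where
  "rho2 g t s = oinner (ps (I2 g) t s) (I6 g t s)"

definition alpha :: "(real \<Rightarrow> real \<Rightarrow> oct) \<Rightarrow> real \<Rightarrow> real \<Rightarrow> real" where
  "alpha g t s = oinner (ps (I2 g) t s) (I3 g t s)"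

definition beta1 :: "(real \<Rightarrow> real \<Rightarrow> oct) \<Rightarrow> real \<Rightarrow> real \<Rightarrow> real" where
  "beta1 g t s = oinner (ps (I2 g) t s) (I7 g t s)"

definition beta2 :: "(real \<Rightarrow> real \<Rightarrow> oct) \<Rightarrow> real \<Rightarrow> real \<Rightarrow> real" where
  "beta2 g t s = oinner (ps (I3 g) t s) (I6 g t s)"

definition rr :: "(real \<Rightarrow> real \<Rightarrow> oct) \<Rightarrow> real \<Rightarrow> real \<Rightarrow> complex" where
  "rr g t s = complex_of_real (1 / sqrt 2) * exp (- \<i> * complex_of_real (sint (rho1 g t) s))"

definition qq :: "(real \<Rightarrow> real \<Rightarrow> oct) \<Rightarrow> real \<Rightarrow> real \<Rightarrow> complex" where
  "qq g t s = complex_of_real (1 / sqrt 2) * exp (- \<i> * complex_of_real (sint (rho2 g t) s))"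

definition phi1 :: "(real \<Rightarrow> real \<Rightarrow> oct) \<Rightarrow> real \<Rightarrow> real \<Rightarrow> complex" where
  "phi1 g t s = complex_of_real (k1 g t s) * cnj (rr g t s)"

definition phi2 :: "(real \<Rightarrow> real \<Rightarrow> oct) \<Rightarrow> real \<Rightarrow> real \<Rightarrow> complex" where
  "phi2 g t s = complex_of_real (2 * kappa2 g t s) * rr g t s * cnj (qq g t s)"

definition phi3 :: "(real \<Rightarrow> real \<Rightarrow> oct) \<Rightarrow> real \<Rightarrow> real \<Rightarrow> complex" where
  "phi3 g t s = - complex_of_real (sqrt 2) * (qq g t s)\<^sup>2 * rr g t s *
      (complex_of_real (2 * alpha g t s) + \<i> * complex_of_real (beta1 g t s + beta2 g t s))"

definition Efr :: "(real \<Rightarrow> real \<Rightarrow> oct) \<Rightarrow> nat \<Rightarrow> real \<Rightarrow> real \<Rightarrow> oct" where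
  "Efr g i = (if i = 1 then I4 g else if i = 2 then (\<lambda>t s. - I5 g t s)
              else if i = 3 then I1 g else if i = 4 then I2 g else if i = 5 then I6 g
              else if i = 6 then I3 g else I7 g)"

text \<open>Coframe: omega^1 = ds, omega^2 = w2 dt with w2 = sqrt 2 |phi1|.\<close>
definition w2 :: "(real \<Rightarrow> real \<Rightarrow> oct) \<Rightarrow> real \<Rightarrow> real \<Rightarrow> real" where
  "w2 g t s = sqrt 2 * cmod (phi1 g t s)"

text \<open>For an orthonormal frame F, omega_i^a = <dF_i, F_a> = h^a_{i1} ds + h^a_{i2} w2 dt,
  so h^a_{i1} = <d_s F_i, F_a> and h^a_{i2} = <d_t F_i, F_a> / w2.\<close>
definition hcoef :: "(real \<Rightarrow> real \<Rightarrow> oct) \<Rightarrow> (nat \<Rightarrow> real \<Rightarrow> real \<Rightarrow> oct)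
                     \<Rightarrow> nat \<Rightarrow> nat \<Rightarrow> nat \<Rightarrow> real \<Rightarrow> real \<Rightarrow> real" where
  "hcoef g F a i j t s =
     (if j = 1 then oinner (ps (F i) t s) (F a t s)
      else oinner (pt (F i) t s) (F a t s) / w2 g t s)"

definition theta :: "(real \<Rightarrow> real \<Rightarrow> oct) \<Rightarrow> real \<Rightarrow> real \<Rightarrow> real" where
  "theta g t s = arccos (hcoef g (Efr g) 4 2 2 t s /
      sqrt ((hcoef g (Efr g) 4 2 2 t s)\<^sup>2 + 9/4 * (cmod (phi2 g t s))\<^sup>2))"

definition Etil :: "(real \<Rightarrow> real \<Rightarrow> oct) \<Rightarrow> nat \<Rightarrow> real \<Rightarrow> real \<Rightarrow> oct" where
  "Etil g i = (if i = 4 then (\<lambda>t s. cos (theta g t s) *\<^sub>R Efr g 4 t s - sin (theta g t s) *\<^sub>R Efr g 7 t s)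
               else if i = 7 then (\<lambda>t s. sin (theta g t s) *\<^sub>R Efr g 4 t s + cos (theta g t s) *\<^sub>R Efr g 7 t s)
               else Efr g i)"

end

theory Submission
  imports Defs
begin

(* Put a = I1, b = I2, c = gamma_s.  These form a special triple, so that
   a, b, c, a x c, b x c, a x b, (a x b) x c is an orthonormal basis of Im(O) whose cross
   products are all known.  The Frenet-type equations I4_s = k1 I1,
   I1_s = kappa2 I2 - k1 I4 + rho1 I5 and I5_s = kappa2 I6 - rho1 I1, together with
   gamma_st = gamma_s x gamma_sss (from the flow equation and the symmetry of mixed
   partials), show that d_s E1, d_s E2 and d_t E1 lie in the span of a, a x c, b x c, hence
   are orthogonal to E4, E6 and E7.  For d_t E2 one has to expand up to gamma_ssss:
   phi3 = 0 means alpha = 0 and beta1 + beta2 = 0; the first kills the E6 component, the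
   second forces <I2_s, I7> = -k1/2, which makes the E7 component equal to
   -(3/2) kappa2 = -(3/2) |phi2|.  The angle theta rotates E4, E7 exactly so that the
   rotated E7 is orthogonal to the resulting vector (h^4_22, h^7_22). *)

section \<open>The cross product on the imaginary octonions\<close>

lemma oinner_eq_inner: "oinner x y = inner x y"
  by (cases x; cases y)
    (auto simp: oinner_def ore_def inner_prod_def split: prod.splits; simp add: algebra_simps)

lemma onorm_eq_norm: "onorm x = norm x"
  by (simp add: onorm_def oinner_eq_inner norm_eq_sqrt_inner)

lemma ocross_add_left: "ocross (x + y) z = ocross x z + ocross y z"
  by (cases x; cases y; cases z) (auto simp: ocross_def split: prod.splits; simp add: field_simps)

lemma ocross_scaleR_left: "ocross (r *\<^sub>R x) z = r *\<^sub>R ocross x z"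
  by (cases x; cases z) (auto simp: ocross_def split: prod.splits; simp add: field_simps)

lemma ocross_antisym: "ocross x y = - ocross y x"
  by (cases x; cases y) (auto simp: ocross_def split: prod.splits; simp add: field_simps)

lemma ocross_self: "ocross x x = 0"
  by (simp add: ocross_def)

lemma ocross_in_ImO: "ocross x y \<in> ImO"
  by (cases x; cases y)
    (auto simp: ocross_def ImO_def ore_def split: prod.splits; simp add: field_simps)

lemma bounded_bilinear_ocross: "bounded_bilinear ocross"
proof -
  have "ocross z (x + y) = ocross z x + ocross z y" "ocross z (r *\<^sub>R x) = r *\<^sub>R ocross z x"
    for x y z :: oct and r
    by (metis ocross_antisym ocross_add_left minus_add_distrib)
      (metis ocross_antisym ocross_scaleR_left scaleR_minus_right)
  then have "bilinear ocross"
    by (simp add: bilinear_def linear_iff ocross_add_left ocross_scaleR_left)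
  then show ?thesis
    by (simp add: bilinear_conv_bounded_bilinear)
qed

interpretation ocross: bounded_bilinear ocross
  by (rule bounded_bilinear_ocross)

lemma ImO_diff: "x \<in> ImO \<Longrightarrow> y \<in> ImO \<Longrightarrow> x - y \<in> ImO"
  by (simp add: ImO_def ore_def)

lemma ImO_scaleR: "x \<in> ImO \<Longrightarrow> r *\<^sub>R x \<in> ImO"
  by (simp add: ImO_def ore_def)

lemma inner_ocross_exchange:
  "x \<in> ImO \<Longrightarrow> y \<in> ImO \<Longrightarrow> z \<in> ImO \<Longrightarrow> inner (ocross x y) z = inner x (ocross y z)"
  by (cases x; cases y; cases z)
    (auto simp: ocross_def ImO_def ore_def inner_prod_def split: prod.splits; simp add: field_simps)

lemma ocross_ocross_same:
  "x \<in> ImO \<Longrightarrow> y \<in> ImO \<Longrightarrow> ocross x (ocross x y) = inner y x *\<^sub>R x - inner x x *\<^sub>R y"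
  by (cases x; cases y)
    (auto simp: ocross_def ImO_def ore_def inner_prod_def split: prod.splits; simp add: field_simps)

lemma ocross_ocross_polar:
  "x \<in> ImO \<Longrightarrow> y \<in> ImO \<Longrightarrow> z \<in> ImO \<Longrightarrow>
   ocross x (ocross y z) + ocross (ocross x y) z
     = (2 * inner x z) *\<^sub>R y - inner x y *\<^sub>R z - inner y z *\<^sub>R x"
  by (cases x; cases y; cases z)
    (auto simp: ocross_def ImO_def ore_def inner_prod_def split: prod.splits; simp add: field_simps)

lemma inner_ocross_ocross:
  "x \<in> ImO \<Longrightarrow> y \<in> ImO \<Longrightarrow> z \<in> ImO \<Longrightarrow>
   inner (ocross x y) (ocross x z) = inner x x * inner y z - inner x y * inner x z"
  by (cases x; cases y; cases z)
    (auto simp: ocross_def ImO_def ore_def inner_prod_def split: prod.splits; simp add: field_simps)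

lemma inner_ocross_left_self: "x \<in> ImO \<Longrightarrow> y \<in> ImO \<Longrightarrow> inner (ocross x y) x = 0"
  using inner_ocross_exchange[of x y x] ocross_antisym[of y x] ocross_in_ImO
  by (simp add: inner_commute)

lemma inner_ocross_right_self: "x \<in> ImO \<Longrightarrow> y \<in> ImO \<Longrightarrow> inner (ocross x y) y = 0"
  using inner_ocross_exchange[of x y y] by (simp add: ocross_self)

lemma ocross_ocross_unit:
  assumes "c \<in> ImO" "q \<in> ImO" "inner c c = 1"
  shows "ocross (ocross c q) c = q - inner q c *\<^sub>R c"
  using ocross_ocross_same[OF assms(1,2)] ocross_antisym[of "ocross c q" c] assms(3) by simp

section \<open>Special triples\<close>

text \<open>For a special triple (a, b, c) the seven vectors a, b, c, a \<times> c, b \<times> c, a \<times> b,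
  (a \<times> b) \<times> c form an orthonormal basis of Im(O); along the curve they are
  I1, I2, I4, I5, I6, I3, I7.\<close>

locale special_triple =
  fixes a b c :: oct
  assumes a_Im: "a \<in> ImO" and b_Im: "b \<in> ImO" and c_Im: "c \<in> ImO"
    and a_unit: "inner a a = 1" and b_unit: "inner b b = 1" and c_unit: "inner c c = 1"
    and ab: "inner a b = 0" and ac: "inner a c = 0" and bc: "inner b c = 0"
    and b_ac: "inner b (ocross a c) = 0"
begin

lemma ab_Im: "ocross a b \<in> ImO"
  by (rule ocross_in_ImO)

lemma ba: "inner b a = 0" and ca: "inner c a = 0" and cb: "inner c b = 0"
  using ab ac bc by (simp_all add: inner_commute)

lemma ocross_table:
  "ocross c a = - ocross a c"
  "ocross c b = - ocross b c"
  "ocross b a = - ocross a b"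
  "ocross c (ocross a c) = a"
  "ocross a (ocross a c) = - c"
  "ocross a (ocross b c) = - ocross (ocross a b) c"
  "ocross b (ocross b c) = - c"
  "ocross (ocross a c) c = - a"
  "ocross (ocross b c) c = - b"
  "ocross a (ocross a b) = - b"
  "ocross b (ocross a c) = ocross (ocross a b) c"
  "ocross (ocross a c) b = - ocross (ocross a b) c"
  "ocross c (ocross b c) = b"
proof -
  show "ocross c a = - ocross a c" "ocross c b = - ocross b c" "ocross b a = - ocross a b"
    by (rule ocross_antisym)+
  show c_ac: "ocross c (ocross a c) = a"
    using ocross_ocross_same[OF c_Im a_Im] ocross_antisym[of a c] c_unit ca ac
    by (simp add: ocross.minus_right)
  show "ocross a (ocross a c) = - c"
    using ocross_ocross_same[OF a_Im c_Im] a_unit ca ac by simp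
  show "ocross a (ocross b c) = - ocross (ocross a b) c"
    using ocross_ocross_polar[OF a_Im b_Im c_Im] ab ac bc by (simp add: eq_neg_iff_add_eq_0)
  show "ocross b (ocross b c) = - c"
    using ocross_ocross_same[OF b_Im c_Im] b_unit cb bc by simp
  show "ocross (ocross a c) c = - a"
    using c_ac ocross_antisym[of "ocross a c" c] by simp
  show bc_c: "ocross (ocross b c) c = - b"
    using ocross_ocross_same[OF c_Im b_Im] ocross_antisym[of b c] ocross_antisym[of "ocross b c" c]
      c_unit cb bc
    by (simp add: ocross.minus_right)
  show "ocross a (ocross a b) = - b"
    using ocross_ocross_same[OF a_Im b_Im] a_unit ba ab by simp
  show b_ac: "ocross b (ocross a c) = ocross (ocross a b) c"
    using ocross_ocross_polar[OF b_Im a_Im c_Im] ocross_antisym[of b a] ab ac bc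
    by (simp add: ocross.minus_left inner_commute eq_neg_iff_add_eq_0 algebra_simps)
  show "ocross (ocross a c) b = - ocross (ocross a b) c"
    using b_ac ocross_antisym[of "ocross a c" b] by simp
  show "ocross c (ocross b c) = b"
    using bc_c ocross_antisym[of c "ocross b c"] by simp
qed

lemma inner_table:
  "inner a (ocross a b) = 0" "inner b (ocross a b) = 0" "inner c (ocross a b) = 0"
  "inner a (ocross a c) = 0" "inner c (ocross a c) = 0"
  "inner a (ocross b c) = 0" "inner b (ocross b c) = 0" "inner c (ocross b c) = 0"
  "inner (ocross a c) (ocross a b) = 0" "inner (ocross b c) (ocross a b) = 0"
  "inner (ocross a c) (ocross b c) = 0"
  "inner (ocross a b) (ocross a b) = 1" "inner (ocross a c) (ocross a c) = 1"
  "inner (ocross b c) (ocross b c) = 1"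
proof -
  note self = inner_ocross_left_self inner_ocross_right_self
  show "inner a (ocross a b) = 0" "inner b (ocross a b) = 0"
    using self[OF a_Im b_Im] by (simp_all add: inner_commute)
  show "inner c (ocross a b) = 0"
    using inner_ocross_exchange[OF c_Im a_Im b_Im] ocross_antisym[of c a] b_ac
    by (simp add: inner_commute)
  show "inner a (ocross a c) = 0" "inner c (ocross a c) = 0"
    using self[OF a_Im c_Im] by (simp_all add: inner_commute)
  show "inner b (ocross b c) = 0" "inner c (ocross b c) = 0"
    using self[OF b_Im c_Im] by (simp_all add: inner_commute)
  show "inner a (ocross b c) = 0"
    using inner_ocross_exchange[OF a_Im b_Im c_Im] ocross_antisym[of a b] b_ac
      inner_ocross_exchange[OF b_Im a_Im c_Im]
    by (simp add: inner_commute)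
  show "inner (ocross a b) (ocross a b) = 1"
    using inner_ocross_ocross[OF a_Im b_Im b_Im] a_unit b_unit ab by simp
  show "inner (ocross a c) (ocross a c) = 1" "inner (ocross a c) (ocross a b) = 0"
    using inner_ocross_ocross[OF a_Im c_Im c_Im] inner_ocross_ocross[OF a_Im c_Im b_Im]
      a_unit c_unit ac ab bc
    by (simp_all add: inner_commute)
  show "inner (ocross b c) (ocross b c) = 1" "inner (ocross b c) (ocross a b) = 0"
    using inner_ocross_ocross[OF b_Im c_Im c_Im] inner_ocross_ocross[OF b_Im c_Im a_Im]
      b_unit c_unit bc ab ac ocross_antisym[of b a]
    by (simp_all add: inner_commute)
  show "inner (ocross a c) (ocross b c) = 0"
    using inner_ocross_ocross[OF c_Im a_Im b_Im] ocross_antisym[of c a] ocross_antisym[of c b]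
      c_unit ab ac bc
    by (simp add: inner_commute)
qed

lemma inner_I7_table:
  "inner a (ocross (ocross a b) c) = 0" "inner b (ocross (ocross a b) c) = 0"
  "inner c (ocross (ocross a b) c) = 0"
  "inner (ocross (ocross a b) c) (ocross a b) = 0"
  "inner (ocross (ocross a b) c) (ocross a c) = 0"
  "inner (ocross (ocross a b) c) (ocross b c) = 0"
  "inner (ocross (ocross a b) c) (ocross (ocross a b) c) = 1"
proof -
  have I7: "inner (ocross (ocross a b) c) (ocross z c)
      = inner (ocross a b) z - inner c (ocross a b) * inner c z" if "z \<in> ImO" for z
    using inner_ocross_ocross[OF c_Im ab_Im that] c_unit
      ocross_antisym[of "ocross a b" c] ocross_antisym[of z c]
    by simp
  show "inner (ocross (ocross a b) c) (ocross (ocross a b) c) = 1"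
    using I7[OF ab_Im] inner_table by simp
  show "inner (ocross (ocross a b) c) (ocross a c) = 0"
    "inner (ocross (ocross a b) c) (ocross b c) = 0"
    using I7[OF a_Im] I7[OF b_Im] inner_table by (simp_all add: inner_commute)
  show "inner (ocross (ocross a b) c) (ocross a b) = 0" "inner c (ocross (ocross a b) c) = 0"
    using inner_ocross_left_self[OF ab_Im c_Im] inner_ocross_right_self[OF ab_Im c_Im]
    by (simp_all add: inner_commute)
  show "inner a (ocross (ocross a b) c) = 0" "inner b (ocross (ocross a b) c) = 0"
    using inner_ocross_exchange[OF ab_Im c_Im a_Im] inner_ocross_exchange[OF ab_Im c_Im b_Im]
      ocross_antisym[of c a] ocross_antisym[of c b] inner_table
    by (simp_all add: inner_commute)
qed

lemma inner_ocross_a_bc: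
  "q \<in> ImO \<Longrightarrow> inner (ocross a q) (ocross b c) = inner q (ocross (ocross a b) c)"
  using inner_ocross_exchange[of q a "ocross b c"] ocross_antisym[of a q] ocross_table(6)
  by (simp add: a_Im b_Im c_Im ocross_in_ImO)

lemmas frame_simps =
  ocross.add_left ocross.add_right ocross.diff_left ocross.diff_right
  ocross.scaleR_left ocross.scaleR_right ocross.minus_left ocross.minus_right
  ocross.zero_left ocross.zero_right ocross_self
  inner_add_left inner_add_right inner_diff_left inner_diff_right
  inner_scaleR_left inner_scaleR_right inner_minus_left inner_minus_right
  ocross_table inner_table inner_table[THEN trans[OF inner_commute]]
  inner_I7_table inner_I7_table[THEN trans[OF inner_commute]]
  a_unit b_unit c_unit ab ac bc ba ca cb b_ac b_ac[THEN trans[OF inner_commute]]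

lemma beta_sum_zero_imp_inner_I7:
  assumes q: "q \<in> ImO" and p: "p = \<kappa> *\<^sub>R b - n *\<^sub>R c + \<rho> *\<^sub>R ocross a c"
    and beta: "inner q (ocross (ocross a b) c) + inner (ocross a q + ocross p b) (ocross b c) = 0"
  shows "inner q (ocross (ocross a b) c) = - n / 2"
proof -
  have "inner (ocross p b) (ocross b c) = n"
    unfolding p by (simp add: frame_simps)
  then show ?thesis
    using beta inner_ocross_a_bc[OF q] by (simp add: inner_add_left)
qed

text \<open>The expansion of I5_t in terms of q = I2_s, p = I1_s, p' = I1_ss, C = gamma_sss and
  D = gamma_ssss; the coefficients \<kappa>', \<nu>, \<rho>', e', \<mu> drop out.\<close>

lemma pt_I5_algebra:
  fixes q p p' C D V :: oct
  assumes q: "q \<in> ImO" "inner q b = 0" "inner q (ocross a b) = 0"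
      "inner q (ocross (ocross a b) c) = - n / 2"
    and n: "n > 0"
    and p: "p = \<kappa> *\<^sub>R b - n *\<^sub>R c + \<rho> *\<^sub>R ocross a c"
    and C: "C = e *\<^sub>R a + n *\<^sub>R p"
    and p': "p' = \<kappa> *\<^sub>R q + \<kappa>' *\<^sub>R b - n *\<^sub>R (n *\<^sub>R a) + \<nu> *\<^sub>R c
      + \<rho> *\<^sub>R (\<kappa> *\<^sub>R ocross b c - \<rho> *\<^sub>R a) + \<rho>' *\<^sub>R ocross a c"
    and D: "D = (2 * e) *\<^sub>R p + e' *\<^sub>R a + n *\<^sub>R p'"
    and V: "V = ocross a (ocross c C)
      + ocross ((1 / n) *\<^sub>R (ocross c D + ocross (n *\<^sub>R a) C) - \<mu> *\<^sub>R (n *\<^sub>R a)) c"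
  shows "inner V (ocross a b) = 0" and "inner V (ocross (ocross a b) c) = 3/2 * n * \<kappa>"
proof -
  note q_simps = ocross_ocross_unit[OF c_Im q(1) c_unit] q(2-4)
  show "inner V (ocross a b) = 0"
    unfolding V D p' C p using n by (simp add: frame_simps q_simps)
  show "inner V (ocross (ocross a b) c) = 3/2 * n * \<kappa>"
    unfolding V D p' C p using n by (simp add: frame_simps q_simps field_simps)
qed

end

section \<open>Calculus of curves in a normed space\<close>

lemma has_vector_derivative_eq_on_open:
  assumes "open S" "s \<in> S" "\<And>\<sigma>. \<sigma> \<in> S \<Longrightarrow> f \<sigma> = h \<sigma>"
    and "(f has_vector_derivative f') (at s)" "(h has_vector_derivative h') (at s)"
  shows "f' = h'"
proof -
  have "(h has_vector_derivative f') (at s)"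
    by (rule has_vector_derivative_transform_within_open[OF assms(4) assms(1,2)])
      (simp add: assms(3))
  then show ?thesis
    using assms(5) vector_derivative_unique_at by blast
qed

lemma has_vector_derivative_const_on_open:
  assumes "open S" "s \<in> S" "\<And>\<sigma>. \<sigma> \<in> S \<Longrightarrow> f \<sigma> = k" "(f has_vector_derivative f') (at s)"
  shows "f' = 0"
  using has_vector_derivative_eq_on_open[OF assms(1,2), of f "\<lambda>_. k", OF assms(3,4)] by simp

lemma has_vector_derivative_inner_const_on_open:
  assumes "open S" "s \<in> S" "\<And>\<sigma>. \<sigma> \<in> S \<Longrightarrow> inner (f \<sigma>) (h \<sigma>) = k"
    and "(f has_vector_derivative f') (at s)" "(h has_vector_derivative h') (at s)"
  shows "inner (f s) h' + inner f' (h s) = 0"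
proof -
  have d: "((\<lambda>\<sigma>. inner (f \<sigma>) (h \<sigma>)) has_vector_derivative inner (f s) h' + inner f' (h s)) (at s)"
    by (rule bounded_bilinear.has_vector_derivative[OF bounded_bilinear_inner assms(4,5)])
  show ?thesis
    using has_vector_derivative_const_on_open[OF assms(1,2) _ d] assms(3) by blast
qed

lemma has_vector_derivative_unit_on_open:
  assumes "open S" "s \<in> S" "\<And>\<sigma>. \<sigma> \<in> S \<Longrightarrow> inner (f \<sigma>) (f \<sigma>) = 1"
    and "(f has_vector_derivative f') (at s)"
  shows "inner f' (f s) = 0"
  using has_vector_derivative_inner_const_on_open[OF assms(1-3) assms(4,4)]
  by (simp add: inner_commute)

lemma has_vector_derivative_ImO:
  assumes "open S" "s \<in> S" "\<And>\<sigma>. \<sigma> \<in> S \<Longrightarrow> f \<sigma> \<in> ImO"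
    and "(f has_vector_derivative f') (at s)"
  shows "f' \<in> ImO"
proof -
  have "bounded_linear (\<lambda>x::oct. fst (fst x))"
    using bounded_linear_compose[OF bounded_linear_fst bounded_linear_fst] by (simp add: o_def)
  then have d: "((\<lambda>\<sigma>. fst (fst (f \<sigma>))) has_vector_derivative fst (fst f')) (at s)"
    by (rule bounded_linear.has_vector_derivative[OF _ assms(4)])
  have z: "\<And>\<sigma>. \<sigma> \<in> S \<Longrightarrow> fst (fst (f \<sigma>)) = 0"
    using assms(3) by (simp add: ImO_def ore_def)
  have "fst (fst f') = 0"
    by (rule has_vector_derivative_const_on_open[OF assms(1,2) z d])
  then show ?thesis
    by (simp add: ImO_def ore_def)
qed

lemma has_real_derivative_norm:
  fixes f :: "real \<Rightarrow> 'a::real_inner"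
  assumes f: "(f has_vector_derivative f') (at x)" and nz: "f x \<noteq> 0"
  shows "((\<lambda>x. norm (f x)) has_real_derivative inner (f x) f' / norm (f x)) (at x)"
proof -
  have "((\<lambda>x. norm (f x)) has_derivative (\<lambda>h. inner (h *\<^sub>R f') (sgn (f x)))) (at x)"
    using has_derivative_compose[OF f[unfolded has_vector_derivative_def] has_derivative_norm[OF nz]] .
  moreover have "(\<lambda>h. inner (h *\<^sub>R f') (sgn (f x))) = (*) (inner (f x) f' / norm (f x))"
    by (rule ext) (simp add: sgn_div_norm inner_commute divide_inverse ac_simps)
  ultimately show ?thesis
    unfolding has_field_derivative_def by simp
qed

lemma has_vector_derivative_normalize:
  fixes f :: "real \<Rightarrow> 'a::real_inner"
  assumes f: "(f has_vector_derivative f') (at x)" and nz: "f x \<noteq> 0"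
  shows "((\<lambda>x. (1 / norm (f x)) *\<^sub>R f x) has_vector_derivative
     ((1 / norm (f x)) *\<^sub>R f' - (inner (f x) f' / norm (f x) ^ 3) *\<^sub>R f x)) (at x)"
proof -
  have nz': "norm (f x) \<noteq> 0"
    using nz by simp
  have "((\<lambda>x. 1 / norm (f x)) has_real_derivative - (inner (f x) f' / norm (f x) ^ 3)) (at x)"
    by (rule DERIV_cong[OF DERIV_divide[OF DERIV_const has_real_derivative_norm[OF f nz] nz']])
      (use nz' in \<open>simp add: power3_eq_cube\<close>)
  from has_vector_derivative_scaleR[OF this f] show ?thesis
    by (simp add: algebra_simps)
qed

lemma vector_derivative_works_eq_on_open:
  assumes "open S" "s \<in> S" "\<And>\<sigma>. \<sigma> \<in> S \<Longrightarrow> f \<sigma> = h \<sigma>" "h differentiable (at s)"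
  shows "(f has_vector_derivative vector_derivative f (at s)) (at s)"
proof -
  have "(h has_vector_derivative vector_derivative h (at s)) (at s)"
    using assms(4) vector_derivative_works by blast
  then have "(f has_vector_derivative vector_derivative h (at s)) (at s)"
    by (rule has_vector_derivative_transform_within_open[OF _ assms(1,2)]) (simp add: assms(3))
  then show ?thesis
    by (simp add: vector_derivative_at)
qed

lemma differentiable_sqrt_at:
  fixes f :: "real \<Rightarrow> real"
  assumes "f differentiable (at x)" "f x > 0"
  shows "(\<lambda>x. sqrt (f x)) differentiable (at x)"
proof -
  have "sqrt differentiable (at (f x))"
    using DERIV_real_sqrt[OF assms(2)] by (auto simp: has_field_derivative_def intro: differentiableI)
  then show ?thesis
    by (rule differentiable_compose[OF _ assms(1)])
qed

section \<open>Symmetry of mixed partial derivatives\<close>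

text \<open>Differentiate f(b,s) = f(a,s) + (integral of f_t(r,s) over a \<le> r \<le> b) under the
  integral sign.\<close>

lemma partial_derivative_eq_integral:
  fixes f ft fs fts :: "real \<Rightarrow> real \<Rightarrow> 'a::euclidean_space"
  assumes S: "open S" "convex S" and ab: "a \<le> b" and s0: "s0 \<in> S"
    and ft: "\<And>\<tau> \<sigma>. \<tau> \<in> {a..b} \<Longrightarrow> \<sigma> \<in> S \<Longrightarrow> ((\<lambda>\<tau>. f \<tau> \<sigma>) has_vector_derivative ft \<tau> \<sigma>) (at \<tau>)"
    and fts: "\<And>\<tau> \<sigma>. \<tau> \<in> {a..b} \<Longrightarrow> \<sigma> \<in> S \<Longrightarrow> ((\<lambda>\<sigma>. ft \<tau> \<sigma>) has_vector_derivative fts \<tau> \<sigma>) (at \<sigma>)"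
    and fs: "\<And>\<tau> \<sigma>. \<tau> \<in> {a..b} \<Longrightarrow> \<sigma> \<in> S \<Longrightarrow> ((\<lambda>\<sigma>. f \<tau> \<sigma>) has_vector_derivative fs \<tau> \<sigma>) (at \<sigma>)"
    and cont: "continuous_on ({a..b} \<times> S) (\<lambda>(\<tau>,\<sigma>). fts \<tau> \<sigma>)"
  shows "fs b s0 = fs a s0 + integral {a..b} (\<lambda>r. fts r s0)"
proof -
  have a: "a \<in> {a..b}" and b: "b \<in> {a..b}"
    using ab by auto
  have ftc: "((\<lambda>r. ft r \<sigma>) has_integral (f b \<sigma> - f a \<sigma>)) {a..b}" if "\<sigma> \<in> S" for \<sigma>
    using ab that by (intro fundamental_theorem_of_calculus) (auto intro!: has_vector_derivative_at_within[OF ft])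
  have "((\<lambda>\<sigma>. integral (cbox a b) (\<lambda>r. ft r \<sigma>)) has_vector_derivative
      integral (cbox a b) (\<lambda>r. fts r s0)) (at s0 within S)"
  proof (rule leibniz_rule_vector_derivative[OF _ _ _ s0 \<open>convex S\<close>])
    show "((\<lambda>x. ft r x) has_vector_derivative fts r x) (at x within S)"
      if "x \<in> S" "r \<in> cbox a b" for x r
      using that by (intro has_vector_derivative_at_within[OF fts]) auto
    show "(\<lambda>r. ft r x) integrable_on cbox a b" if "x \<in> S" for x
      using ftc[OF that] by auto
    have "continuous_on (S \<times> cbox a b) (\<lambda>(x,r). (r,x))"
      by (auto intro!: continuous_intros simp: split_beta)
    moreover have "continuous_on ((\<lambda>(x,r). (r,x)) ` (S \<times> cbox a b)) (\<lambda>(\<tau>,\<sigma>). fts \<tau> \<sigma>)"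
      by (rule continuous_on_subset[OF cont]) auto
    ultimately have "continuous_on (S \<times> cbox a b) ((\<lambda>(\<tau>,\<sigma>). fts \<tau> \<sigma>) \<circ> (\<lambda>(x,r). (r,x)))"
      by (rule continuous_on_compose)
    then show "continuous_on (S \<times> cbox a b) (\<lambda>(x, r). fts r x)"
      by (simp add: o_def split_beta)
  qed
  then have "((\<lambda>\<sigma>. integral {a..b} (\<lambda>r. ft r \<sigma>)) has_vector_derivative
      integral {a..b} (\<lambda>r. fts r s0)) (at s0)"
    using at_within_open[OF s0 S(1)] by (simp only: cbox_interval)
  then have d: "((\<lambda>\<sigma>. f a \<sigma> + integral {a..b} (\<lambda>r. ft r \<sigma>)) has_vector_derivative
      fs a s0 + integral {a..b} (\<lambda>r. fts r s0)) (at s0)"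
    by (rule has_vector_derivative_add[OF fs[OF a s0]])
  have e: "f a \<sigma> + integral {a..b} (\<lambda>r. ft r \<sigma>) = f b \<sigma>" if "\<sigma> \<in> S" for \<sigma>
    using ftc[OF that] by (simp add: integral_unique)
  show ?thesis
    using has_vector_derivative_eq_on_open[OF S(1) s0 e d fs[OF b s0]] by simp
qed

lemma mixed_partials_commute:
  fixes f ft fs fts fst :: "real \<Rightarrow> real \<Rightarrow> 'a::euclidean_space"
  assumes T: "open T" and S: "open S" "convex S"
    and ft: "\<And>\<tau> \<sigma>. \<tau> \<in> T \<Longrightarrow> \<sigma> \<in> S \<Longrightarrow> ((\<lambda>\<tau>. f \<tau> \<sigma>) has_vector_derivative ft \<tau> \<sigma>) (at \<tau>)"
    and fts: "\<And>\<tau> \<sigma>. \<tau> \<in> T \<Longrightarrow> \<sigma> \<in> S \<Longrightarrow> ((\<lambda>\<sigma>. ft \<tau> \<sigma>) has_vector_derivative fts \<tau> \<sigma>) (at \<sigma>)"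
    and fs: "\<And>\<tau> \<sigma>. \<tau> \<in> T \<Longrightarrow> \<sigma> \<in> S \<Longrightarrow> ((\<lambda>\<sigma>. f \<tau> \<sigma>) has_vector_derivative fs \<tau> \<sigma>) (at \<sigma>)"
    and fst: "\<And>\<tau> \<sigma>. \<tau> \<in> T \<Longrightarrow> \<sigma> \<in> S \<Longrightarrow> ((\<lambda>\<tau>. fs \<tau> \<sigma>) has_vector_derivative fst \<tau> \<sigma>) (at \<tau>)"
    and cont: "continuous_on (T \<times> S) (\<lambda>(\<tau>,\<sigma>). fts \<tau> \<sigma>)"
    and t0: "t0 \<in> T" and s0: "s0 \<in> S"
  shows "fst t0 s0 = fts t0 s0"
proof -
  obtain e where e: "e > 0" "ball t0 e \<subseteq> T"
    using T t0 open_contains_ball by blast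
  define a where "a = t0 - e/2"
  define b where "b = t0 + e/2"
  have ab: "{a..b} \<subseteq> T"
    using e by (auto simp: a_def b_def subset_iff dist_real_def)
  have t0_ab: "t0 \<in> {a<..<b}"
    using e by (auto simp: a_def b_def)
  have fs_eq: "fs a s0 + integral {a..\<tau>} (\<lambda>r. fts r s0) = fs \<tau> s0" if "\<tau> \<in> {a<..<b}" for \<tau>
    using that ab s0
    by (intro partial_derivative_eq_integral[OF S, where f=f and ft=ft, symmetric] ft fts fs
        continuous_on_subset[OF cont]) auto
  have "continuous_on {a..b} ((\<lambda>(\<tau>,\<sigma>). fts \<tau> \<sigma>) \<circ> (\<lambda>r. (r,s0)))"
    by (rule continuous_on_compose[OF continuous_on_Pair[OF continuous_on_id continuous_on_const]
          continuous_on_subset[OF cont]]) (use ab s0 in auto)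
  then have "((\<lambda>u. integral {a..u} (\<lambda>r. fts r s0)) has_vector_derivative fts t0 s0) (at t0 within {a..b})"
    using t0_ab by (intro integral_has_vector_derivative) (auto simp: o_def)
  then have "((\<lambda>u. fs a s0 + integral {a..u} (\<lambda>r. fts r s0)) has_vector_derivative fts t0 s0) (at t0)"
    using t0_ab at_within_Icc_at[of a t0 b]
    by (intro has_vector_derivative_add[OF has_vector_derivative_const, simplified]) simp
  then have "((\<lambda>u. fs u s0) has_vector_derivative fts t0 s0) (at t0)"
    using fs_eq by (rule has_vector_derivative_transform_within_open[OF _ open_greaterThanLessThan t0_ab])
  then show ?thesis
    using fst[OF t0 s0] vector_derivative_unique_at by blast
qed

section \<open>The moving frame along a solution\<close>

lemma k1_eq_norm: "k1 g t s = norm (ps (ps g) t s)"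
  by (simp add: k1_def onorm_eq_norm)

lemma I1_eq: "I1 g t s = (1 / norm (ps (ps g) t s)) *\<^sub>R ps (ps g) t s"
  by (simp add: I1_def k1_eq_norm I4_def)

lemma I5_eq: "I5 g t s = ocross (I1 g t s) (ps g t s)"
  by (simp add: I5_def I4_def)

lemma kappa2_eq:
  "kappa2 g t s = sqrt (inner (ps (I1 g) t s) (ps (I1 g) t s)
     - (inner (ps (I1 g) t s) (ps g t s))\<^sup>2 - (inner (ps (I1 g) t s) (I5 g t s))\<^sup>2)"
  by (simp add: kappa2_def onorm_eq_norm oinner_eq_inner I4_def power2_norm_eq_inner)

lemma I2_eq:
  "I2 g t s = (1 / kappa2 g t s) *\<^sub>R (ps (I1 g) t s
     - inner (ps (I1 g) t s) (ps g t s) *\<^sub>R ps g t s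
     - inner (ps (I1 g) t s) (I5 g t s) *\<^sub>R I5 g t s)"
  by (simp add: I2_def oinner_eq_inner I4_def)

text \<open>gamma_t = gamma_s \<times> gamma_ss is the binormal (vortex filament) flow in Im(O); the
  locale fixes a time t, and s-derivatives are taken along the curve gamma(t, -).\<close>

locale binormal_flow =
  fixes g :: "real \<Rightarrow> real \<Rightarrow> oct" and T S :: "real set" and t :: real
  assumes T: "open T" and S: "open S" "is_interval S"
    and smooth: "smooth2_on (T \<times> S) g"
    and im: "\<forall>t\<in>T. \<forall>s\<in>S. g t s \<in> ImO"
    and eq: "\<forall>t\<in>T. \<forall>s\<in>S. pt g t s = ocross (ps g t s) (ps (ps g) t s)"
    and unit: "\<forall>t\<in>T. \<forall>s\<in>S. onorm (ps g t s) = 1"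
    and k1pos: "\<forall>t\<in>T. \<forall>s\<in>S. k1 g t s > 0"
    and k2pos: "\<forall>t\<in>T. \<forall>s\<in>S. kappa2 g t s > 0"
    and tT: "t \<in> T"
begin

lemma pd_continuous: "continuous_on (T \<times> S) (\<lambda>(\<tau>,\<sigma>). pd ws g \<tau> \<sigma>)"
  using smooth by (simp add: smooth2_on_def)

lemma pd_has_derivative_s:
  "\<tau> \<in> T \<Longrightarrow> \<sigma> \<in> S \<Longrightarrow> ((\<lambda>\<sigma>. pd ws g \<tau> \<sigma>) has_vector_derivative pd (True # ws) g \<tau> \<sigma>) (at \<sigma>)"
  using smooth by (auto simp: smooth2_on_def)

lemma pd_has_derivative_t:
  "\<tau> \<in> T \<Longrightarrow> \<sigma> \<in> S \<Longrightarrow> ((\<lambda>\<tau>. pd ws g \<tau> \<sigma>) has_vector_derivative pd (False # ws) g \<tau> \<sigma>) (at \<tau>)"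
  using smooth by (auto simp: smooth2_on_def)

lemma pd_swap: "\<tau> \<in> T \<Longrightarrow> \<sigma> \<in> S \<Longrightarrow> pd (False # True # ws) g \<tau> \<sigma> = pd (True # False # ws) g \<tau> \<sigma>"
  by (rule mixed_partials_commute[where f="pd ws g" and ft="pd (False # ws) g" and fs="pd (True # ws) g",
        OF T S(1) is_interval_convex[OF S(2)]])
    (use pd_has_derivative_s[of _ _ ws] pd_has_derivative_s[of _ _ "False # ws"]
       pd_has_derivative_t[of _ _ ws] pd_has_derivative_t[of _ _ "True # ws"]
       pd_continuous[of "True # False # ws"] in auto)

lemma g_has_derivative: "\<sigma> \<in> S \<Longrightarrow> ((\<lambda>\<sigma>. g t \<sigma>) has_vector_derivative ps g t \<sigma>) (at \<sigma>)"
  using pd_has_derivative_s[OF tT, of \<sigma> "[]"] by simp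

lemma gs_has_derivative: "\<sigma> \<in> S \<Longrightarrow> ((\<lambda>\<sigma>. ps g t \<sigma>) has_vector_derivative ps (ps g) t \<sigma>) (at \<sigma>)"
  using pd_has_derivative_s[OF tT, of \<sigma> "[True]"] by simp

lemma gss_has_derivative:
  "\<sigma> \<in> S \<Longrightarrow> ((\<lambda>\<sigma>. ps (ps g) t \<sigma>) has_vector_derivative ps (ps (ps g)) t \<sigma>) (at \<sigma>)"
  using pd_has_derivative_s[OF tT, of \<sigma> "[True, True]"] by simp

lemma gsss_has_derivative:
  "\<sigma> \<in> S \<Longrightarrow> ((\<lambda>\<sigma>. ps (ps (ps g)) t \<sigma>) has_vector_derivative ps (ps (ps (ps g))) t \<sigma>) (at \<sigma>)"
  using pd_has_derivative_s[OF tT, of \<sigma> "[True, True, True]"] by simp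

lemma g_ImO: "\<sigma> \<in> S \<Longrightarrow> g t \<sigma> \<in> ImO"
  using im tT by auto

lemma gs_ImO: "\<sigma> \<in> S \<Longrightarrow> ps g t \<sigma> \<in> ImO"
  by (rule has_vector_derivative_ImO[OF S(1) _ g_ImO g_has_derivative])

lemma gss_ImO: "\<sigma> \<in> S \<Longrightarrow> ps (ps g) t \<sigma> \<in> ImO"
  by (rule has_vector_derivative_ImO[OF S(1) _ gs_ImO gs_has_derivative])

lemma gs_unit: "\<sigma> \<in> S \<Longrightarrow> inner (ps g t \<sigma>) (ps g t \<sigma>) = 1"
  using unit tT by (simp add: onorm_eq_norm flip: power2_norm_eq_inner)

lemma gs_orth_gss: "\<sigma> \<in> S \<Longrightarrow> inner (ps g t \<sigma>) (ps (ps g) t \<sigma>) = 0"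
  using has_vector_derivative_unit_on_open[OF S(1) _ gs_unit gs_has_derivative]
  by (simp add: inner_commute)

lemma gss_norm_pos: "\<sigma> \<in> S \<Longrightarrow> norm (ps (ps g) t \<sigma>) > 0"
  using k1pos tT by (simp add: k1_eq_norm)

lemma gss_nonzero: "\<sigma> \<in> S \<Longrightarrow> ps (ps g) t \<sigma> \<noteq> 0"
  using gss_norm_pos by fastforce

lemma I1_has_derivative_normalize: "\<sigma> \<in> S \<Longrightarrow> ((\<lambda>\<sigma>. I1 g t \<sigma>) has_vector_derivative
   (1 / norm (ps (ps g) t \<sigma>)) *\<^sub>R ps (ps (ps g)) t \<sigma>
   - (inner (ps (ps g) t \<sigma>) (ps (ps (ps g)) t \<sigma>) / norm (ps (ps g) t \<sigma>) ^ 3) *\<^sub>R ps (ps g) t \<sigma>)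
   (at \<sigma>)"
  unfolding I1_eq by (rule has_vector_derivative_normalize[OF gss_has_derivative gss_nonzero])

lemma ps_I1_eq: "\<sigma> \<in> S \<Longrightarrow> ps (I1 g) t \<sigma> =
   (1 / norm (ps (ps g) t \<sigma>)) *\<^sub>R ps (ps (ps g)) t \<sigma>
   - (inner (ps (ps g) t \<sigma>) (ps (ps (ps g)) t \<sigma>) / norm (ps (ps g) t \<sigma>) ^ 3) *\<^sub>R ps (ps g) t \<sigma>"
  unfolding ps_def[of "I1 g"] by (rule vector_derivative_at[OF I1_has_derivative_normalize])

lemma I1_has_derivative: "\<sigma> \<in> S \<Longrightarrow> ((\<lambda>\<sigma>. I1 g t \<sigma>) has_vector_derivative ps (I1 g) t \<sigma>) (at \<sigma>)"
  using I1_has_derivative_normalize ps_I1_eq by simp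

lemma gss_norm_differentiable: "\<sigma> \<in> S \<Longrightarrow> (\<lambda>\<sigma>. norm (ps (ps g) t \<sigma>)) differentiable (at \<sigma>)"
  by (rule differentiable_compose[OF differentiable_norm_at[OF gss_nonzero]
        differentiableI_vector[OF gss_has_derivative]])

lemma ps_I1_has_derivative:
  assumes s: "\<sigma> \<in> S"
  shows "((\<lambda>\<sigma>. ps (I1 g) t \<sigma>) has_vector_derivative ps (ps (I1 g)) t \<sigma>) (at \<sigma>)"
proof -
  note gss = differentiableI_vector[OF gss_has_derivative[OF s]]
  note gsss = differentiableI_vector[OF gsss_has_derivative[OF s]]
  have d: "(\<lambda>\<sigma>. (1 / norm (ps (ps g) t \<sigma>)) *\<^sub>R ps (ps (ps g)) t \<sigma>
      - (inner (ps (ps g) t \<sigma>) (ps (ps (ps g)) t \<sigma>) / norm (ps (ps g) t \<sigma>) ^ 3) *\<^sub>R ps (ps g) t \<sigma>)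
      differentiable (at \<sigma>)"
    using gss_norm_pos[OF s]
    by (intro differentiable_diff differentiable_scaleR differentiable_divide differentiable_inner
        differentiable_power differentiable_const gss gsss gss_norm_differentiable[OF s]) auto
  show ?thesis
    unfolding ps_def[of "ps (I1 g)"]
    by (rule vector_derivative_works_eq_on_open[OF S(1) s _ d]) (simp add: ps_I1_eq)
qed

lemma I1_ImO: "\<sigma> \<in> S \<Longrightarrow> I1 g t \<sigma> \<in> ImO"
  unfolding I1_eq by (rule ImO_scaleR[OF gss_ImO])

lemma ps_I1_ImO: "\<sigma> \<in> S \<Longrightarrow> ps (I1 g) t \<sigma> \<in> ImO"
  by (rule has_vector_derivative_ImO[OF S(1) _ I1_ImO I1_has_derivative])

lemma I1_unit: "\<sigma> \<in> S \<Longrightarrow> inner (I1 g t \<sigma>) (I1 g t \<sigma>) = 1"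
  using gss_norm_pos[of \<sigma>] by (simp add: I1_eq power2_eq_square flip: power2_norm_eq_inner)

lemma gss_eq: "\<sigma> \<in> S \<Longrightarrow> ps (ps g) t \<sigma> = norm (ps (ps g) t \<sigma>) *\<^sub>R I1 g t \<sigma>"
  using gss_norm_pos[of \<sigma>] by (simp add: I1_eq)

lemma I1_orth_gs: "\<sigma> \<in> S \<Longrightarrow> inner (I1 g t \<sigma>) (ps g t \<sigma>) = 0"
  using gs_orth_gss[of \<sigma>] by (simp add: I1_eq inner_commute)

lemma ps_I1_orth_I1: "\<sigma> \<in> S \<Longrightarrow> inner (ps (I1 g) t \<sigma>) (I1 g t \<sigma>) = 0"
  by (rule has_vector_derivative_unit_on_open[OF S(1) _ I1_unit I1_has_derivative])

lemma inner_ps_I1_gs: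
  assumes s: "\<sigma> \<in> S"
  shows "inner (ps (I1 g) t \<sigma>) (ps g t \<sigma>) = - norm (ps (ps g) t \<sigma>)"
proof -
  have "inner (I1 g t \<sigma>) (ps (ps g) t \<sigma>) + inner (ps (I1 g) t \<sigma>) (ps g t \<sigma>) = 0"
    by (rule has_vector_derivative_inner_const_on_open[OF S(1) s I1_orth_gs
          I1_has_derivative[OF s] gs_has_derivative[OF s]])
  moreover have "inner (I1 g t \<sigma>) (ps (ps g) t \<sigma>) = norm (ps (ps g) t \<sigma>)"
    using gss_norm_pos[OF s] by (simp add: I1_eq power2_eq_square flip: power2_norm_eq_inner)
  ultimately show ?thesis
    by linarith
qed

lemma I5_has_derivative: "\<sigma> \<in> S \<Longrightarrow> ((\<lambda>\<sigma>. I5 g t \<sigma>) has_vector_derivative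
   ocross (I1 g t \<sigma>) (ps (ps g) t \<sigma>) + ocross (ps (I1 g) t \<sigma>) (ps g t \<sigma>)) (at \<sigma>)"
  unfolding I5_eq by (rule ocross.has_vector_derivative[OF I1_has_derivative gs_has_derivative])

lemma kappa2_pos: "\<sigma> \<in> S \<Longrightarrow> kappa2 g t \<sigma> > 0"
  using k2pos tT by auto

lemma kappa2_radicand_pos: "\<sigma> \<in> S \<Longrightarrow> inner (ps (I1 g) t \<sigma>) (ps (I1 g) t \<sigma>)
   - (inner (ps (I1 g) t \<sigma>) (ps g t \<sigma>))\<^sup>2 - (inner (ps (I1 g) t \<sigma>) (I5 g t \<sigma>))\<^sup>2 > 0"
  using kappa2_pos[of \<sigma>] by (simp add: kappa2_eq)

lemma kappa2_differentiable:
  assumes s: "\<sigma> \<in> S"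
  shows "(\<lambda>\<sigma>. kappa2 g t \<sigma>) differentiable (at \<sigma>)"
  unfolding kappa2_eq
  by (intro differentiable_sqrt_at kappa2_radicand_pos[OF s] differentiable_diff differentiable_power
      differentiable_inner differentiableI_vector[OF ps_I1_has_derivative[OF s]]
      differentiableI_vector[OF gs_has_derivative[OF s]] differentiableI_vector[OF I5_has_derivative[OF s]])

lemma I2_has_derivative:
  assumes s: "\<sigma> \<in> S"
  shows "((\<lambda>\<sigma>. I2 g t \<sigma>) has_vector_derivative ps (I2 g) t \<sigma>) (at \<sigma>)"
proof -
  have "(\<lambda>\<sigma>. I2 g t \<sigma>) differentiable (at \<sigma>)"
    unfolding I2_eq using kappa2_pos[OF s]
    by (intro differentiable_scaleR differentiable_divide differentiable_diff differentiable_inner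
        differentiable_const kappa2_differentiable[OF s]
        differentiableI_vector[OF ps_I1_has_derivative[OF s]]
        differentiableI_vector[OF gs_has_derivative[OF s]]
        differentiableI_vector[OF I5_has_derivative[OF s]]) auto
  then show ?thesis
    unfolding ps_def[of "I2 g"] using vector_derivative_works by blast
qed

lemma ps_I1_decomp: "\<sigma> \<in> S \<Longrightarrow> ps (I1 g) t \<sigma> = kappa2 g t \<sigma> *\<^sub>R I2 g t \<sigma>
   + inner (ps (I1 g) t \<sigma>) (ps g t \<sigma>) *\<^sub>R ps g t \<sigma> + inner (ps (I1 g) t \<sigma>) (I5 g t \<sigma>) *\<^sub>R I5 g t \<sigma>"
  using kappa2_pos[of \<sigma>] by (simp add: I2_eq)

lemma frenet_I1: "\<sigma> \<in> S \<Longrightarrow> ps (I1 g) t \<sigma> = kappa2 g t \<sigma> *\<^sub>R I2 g t \<sigma>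
   - norm (ps (ps g) t \<sigma>) *\<^sub>R ps g t \<sigma> + rho1 g t \<sigma> *\<^sub>R I5 g t \<sigma>"
proof -
  assume s: "\<sigma> \<in> S"
  have "ps (I1 g) t \<sigma> = kappa2 g t \<sigma> *\<^sub>R I2 g t \<sigma> + inner (ps (I1 g) t \<sigma>) (ps g t \<sigma>) *\<^sub>R ps g t \<sigma>
      + inner (ps (I1 g) t \<sigma>) (I5 g t \<sigma>) *\<^sub>R I5 g t \<sigma>"
    by (rule ps_I1_decomp[OF s])
  also have "\<dots> = kappa2 g t \<sigma> *\<^sub>R I2 g t \<sigma> - norm (ps (ps g) t \<sigma>) *\<^sub>R ps g t \<sigma>
      + rho1 g t \<sigma> *\<^sub>R I5 g t \<sigma>"
    by (simp add: inner_ps_I1_gs[OF s] rho1_def oinner_eq_inner)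
  finally show ?thesis .
qed

lemma I5_orthonormal:
  assumes s: "\<sigma> \<in> S"
  shows "inner (I5 g t \<sigma>) (I5 g t \<sigma>) = 1" and "inner (ps g t \<sigma>) (I5 g t \<sigma>) = 0"
    and "inner (I1 g t \<sigma>) (I5 g t \<sigma>) = 0"
  using inner_ocross_ocross[OF I1_ImO[OF s] gs_ImO[OF s] gs_ImO[OF s]] I1_unit[OF s] gs_unit[OF s]
    I1_orth_gs[OF s] inner_ocross_right_self[OF I1_ImO[OF s] gs_ImO[OF s]]
    inner_ocross_left_self[OF I1_ImO[OF s] gs_ImO[OF s]]
  by (simp_all add: I5_eq inner_commute)

lemma I2_ImO: "\<sigma> \<in> S \<Longrightarrow> I2 g t \<sigma> \<in> ImO"
  by (simp add: I2_eq I5_eq ImO_scaleR ImO_diff ps_I1_ImO gs_ImO ocross_in_ImO)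

lemma I2_orthonormal:
  assumes s: "\<sigma> \<in> S"
  shows "inner (I2 g t \<sigma>) (I2 g t \<sigma>) = 1" and "inner (I1 g t \<sigma>) (I2 g t \<sigma>) = 0"
    and "inner (I2 g t \<sigma>) (ps g t \<sigma>) = 0" and "inner (I2 g t \<sigma>) (I5 g t \<sigma>) = 0"
proof -
  define b c p v \<kappa> where
    b_def: "b = I2 g t \<sigma>"
    and c_def: "c = ps g t \<sigma>"
    and p_def: "p = ps (I1 g) t \<sigma>"
    and v_def: "v = I5 g t \<sigma>"
    and \<kappa>_def: "\<kappa> = kappa2 g t \<sigma>"
  have \<kappa>: "\<kappa> > 0"
    using kappa2_pos[OF s] by (simp add: \<kappa>_def)
  have c_unit: "inner c c = 1" and v_unit: "inner v v = 1" and cv: "inner c v = 0"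
    using gs_unit[OF s] I5_orthonormal[OF s] by (simp_all add: c_def v_def)
  have b: "\<kappa> *\<^sub>R b = p - inner p c *\<^sub>R c - inner p v *\<^sub>R v"
    using \<kappa> by (simp add: I2_eq b_def c_def p_def v_def \<kappa>_def)
  have "\<kappa>\<^sup>2 * inner b b = inner (\<kappa> *\<^sub>R b) (\<kappa> *\<^sub>R b)"
    by (simp add: power2_eq_square)
  also have "\<dots> = inner p p - (inner p c)\<^sup>2 - (inner p v)\<^sup>2"
    unfolding b using c_unit v_unit cv
    by (simp add: inner_diff_left inner_diff_right inner_commute power2_eq_square algebra_simps)
  also have "\<dots> = \<kappa>\<^sup>2"
    using kappa2_radicand_pos[OF s] by (simp add: kappa2_eq \<kappa>_def p_def c_def v_def)
  finally show "inner (I2 g t \<sigma>) (I2 g t \<sigma>) = 1"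
    using \<kappa> by (simp add: b_def)
  have \<kappa>_b: "\<kappa> * inner x b = inner x p - inner p c * inner x c - inner p v * inner x v" for x
    using arg_cong[OF b, of "inner x"] by (simp add: inner_diff_right)
  have "\<kappa> * inner (I1 g t \<sigma>) b = 0" "\<kappa> * inner b c = 0" "\<kappa> * inner b v = 0"
    using \<kappa>_b[of "I1 g t \<sigma>"] \<kappa>_b[of c] \<kappa>_b[of v] ps_I1_orth_I1[OF s] I1_orth_gs[OF s]
      I5_orthonormal[OF s] c_unit cv v_unit
    by (simp_all add: inner_commute p_def c_def v_def)
  then show "inner (I1 g t \<sigma>) (I2 g t \<sigma>) = 0" "inner (I2 g t \<sigma>) (ps g t \<sigma>) = 0"
    "inner (I2 g t \<sigma>) (I5 g t \<sigma>) = 0"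
    using \<kappa> by (simp_all add: b_def c_def v_def)
qed

lemma special_triple_at:
  assumes s: "\<sigma> \<in> S"
  shows "special_triple (I1 g t \<sigma>) (I2 g t \<sigma>) (ps g t \<sigma>)"
  by unfold_locales
    (simp_all add: s I1_ImO I2_ImO gs_ImO I1_unit gs_unit I1_orth_gs I2_orthonormal flip: I5_eq)

lemma ps_I2_ImO: "\<sigma> \<in> S \<Longrightarrow> ps (I2 g) t \<sigma> \<in> ImO"
  by (rule has_vector_derivative_ImO[OF S(1) _ I2_ImO I2_has_derivative])

lemma ps_I2_orth_I2: "\<sigma> \<in> S \<Longrightarrow> inner (ps (I2 g) t \<sigma>) (I2 g t \<sigma>) = 0"
  by (rule has_vector_derivative_unit_on_open[OF S(1) _ I2_orthonormal(1) I2_has_derivative])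

lemma frenet_I5: "\<sigma> \<in> S \<Longrightarrow> ps (I5 g) t \<sigma>
   = kappa2 g t \<sigma> *\<^sub>R ocross (I2 g t \<sigma>) (ps g t \<sigma>) - rho1 g t \<sigma> *\<^sub>R I1 g t \<sigma>"
proof -
  assume s: "\<sigma> \<in> S"
  interpret special_triple "I1 g t \<sigma>" "I2 g t \<sigma>" "ps g t \<sigma>"
    by (rule special_triple_at[OF s])
  have "ps (I5 g) t \<sigma> = ocross (I1 g t \<sigma>) (ps (ps g) t \<sigma>) + ocross (ps (I1 g) t \<sigma>) (ps g t \<sigma>)"
    unfolding ps_def[of "I5 g"] by (rule vector_derivative_at[OF I5_has_derivative[OF s]])
  moreover have "ocross (I1 g t \<sigma>) (ps (ps g) t \<sigma>) = 0"
    by (subst gss_eq[OF s]) (simp add: frame_simps)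
  ultimately show ?thesis
    by (simp add: frenet_I1[OF s] I5_eq frame_simps)
qed

lemma ps_I3: "\<sigma> \<in> S \<Longrightarrow>
   ps (I3 g) t \<sigma> = ocross (I1 g t \<sigma>) (ps (I2 g) t \<sigma>) + ocross (ps (I1 g) t \<sigma>) (I2 g t \<sigma>)"
  unfolding ps_def[of "I3 g"] I3_def
  by (rule vector_derivative_at[OF ocross.has_vector_derivative[OF I1_has_derivative I2_has_derivative]])

lemma pt_gs: "\<sigma> \<in> S \<Longrightarrow> pt (ps g) t \<sigma> = ocross (ps g t \<sigma>) (ps (ps (ps g)) t \<sigma>)"
proof -
  assume s: "\<sigma> \<in> S"
  have pt_g: "\<And>\<sigma>. \<sigma> \<in> S \<Longrightarrow> pt g t \<sigma> = ocross (ps g t \<sigma>) (ps (ps g) t \<sigma>)"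
    using eq tT by auto
  have d1: "((\<lambda>\<sigma>. pt g t \<sigma>) has_vector_derivative ps (pt g) t \<sigma>) (at \<sigma>)"
    using pd_has_derivative_s[OF tT s, of "[False]"] by simp
  have d2: "((\<lambda>\<sigma>. ocross (ps g t \<sigma>) (ps (ps g) t \<sigma>)) has_vector_derivative
      ocross (ps g t \<sigma>) (ps (ps (ps g)) t \<sigma>) + ocross (ps (ps g) t \<sigma>) (ps (ps g) t \<sigma>)) (at \<sigma>)"
    by (rule ocross.has_vector_derivative[OF gs_has_derivative[OF s] gss_has_derivative[OF s]])
  have "ps (pt g) t \<sigma>
      = ocross (ps g t \<sigma>) (ps (ps (ps g)) t \<sigma>) + ocross (ps (ps g) t \<sigma>) (ps (ps g) t \<sigma>)"
    by (rule has_vector_derivative_eq_on_open[OF S(1) s pt_g d1 d2])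
  then show ?thesis
    using pd_swap[OF tT s, of "[]"] by (simp add: ocross_self)
qed

lemma pt_gss: "\<sigma> \<in> S \<Longrightarrow> pt (ps (ps g)) t \<sigma>
   = ocross (ps g t \<sigma>) (ps (ps (ps (ps g))) t \<sigma>) + ocross (ps (ps g) t \<sigma>) (ps (ps (ps g)) t \<sigma>)"
proof -
  assume s: "\<sigma> \<in> S"
  have d1: "((\<lambda>\<sigma>. pt (ps g) t \<sigma>) has_vector_derivative ps (pt (ps g)) t \<sigma>) (at \<sigma>)"
    using pd_has_derivative_s[OF tT s, of "[False, True]"] by simp
  have d2: "((\<lambda>\<sigma>. ocross (ps g t \<sigma>) (ps (ps (ps g)) t \<sigma>)) has_vector_derivative
      ocross (ps g t \<sigma>) (ps (ps (ps (ps g))) t \<sigma>) + ocross (ps (ps g) t \<sigma>) (ps (ps (ps g)) t \<sigma>)) (at \<sigma>)"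
    by (rule ocross.has_vector_derivative[OF gs_has_derivative[OF s] gsss_has_derivative[OF s]])
  have "ps (pt (ps g)) t \<sigma>
      = ocross (ps g t \<sigma>) (ps (ps (ps (ps g))) t \<sigma>) + ocross (ps (ps g) t \<sigma>) (ps (ps (ps g)) t \<sigma>)"
    by (rule has_vector_derivative_eq_on_open[OF S(1) s pt_gs d1 d2])
  then show ?thesis
    using pd_swap[OF tT s, of "[True]"] by simp
qed

lemma pt_I5: "\<sigma> \<in> S \<Longrightarrow> ((\<lambda>\<tau>. I5 g \<tau> \<sigma>) has_vector_derivative
   ocross (I1 g t \<sigma>) (pt (ps g) t \<sigma>)
   + ocross ((1 / norm (ps (ps g) t \<sigma>)) *\<^sub>R pt (ps (ps g)) t \<sigma>
       - (inner (ps (ps g) t \<sigma>) (pt (ps (ps g)) t \<sigma>) / norm (ps (ps g) t \<sigma>) ^ 3) *\<^sub>R ps (ps g) t \<sigma>)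
     (ps g t \<sigma>)) (at t)"
proof -
  assume s: "\<sigma> \<in> S"
  have d1: "((\<lambda>\<tau>. ps (ps g) \<tau> \<sigma>) has_vector_derivative pt (ps (ps g)) t \<sigma>) (at t)"
    and d2: "((\<lambda>\<tau>. ps g \<tau> \<sigma>) has_vector_derivative pt (ps g) t \<sigma>) (at t)"
    using pd_has_derivative_t[OF tT s, of "[True, True]"] pd_has_derivative_t[OF tT s, of "[True]"]
    by simp_all
  have "((\<lambda>\<tau>. I1 g \<tau> \<sigma>) has_vector_derivative
      (1 / norm (ps (ps g) t \<sigma>)) *\<^sub>R pt (ps (ps g)) t \<sigma>
      - (inner (ps (ps g) t \<sigma>) (pt (ps (ps g)) t \<sigma>) / norm (ps (ps g) t \<sigma>) ^ 3) *\<^sub>R ps (ps g) t \<sigma>)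
      (at t)"
    unfolding I1_eq by (rule has_vector_derivative_normalize[OF d1 gss_nonzero[OF s]])
  then show ?thesis
    unfolding I5_eq by (rule ocross.has_vector_derivative[OF _ d2])
qed

lemma gsss_eq: "\<sigma> \<in> S \<Longrightarrow> ps (ps (ps g)) t \<sigma> =
   (inner (ps (ps g) t \<sigma>) (ps (ps (ps g)) t \<sigma>) / norm (ps (ps g) t \<sigma>)) *\<^sub>R I1 g t \<sigma>
   + norm (ps (ps g) t \<sigma>) *\<^sub>R ps (I1 g) t \<sigma>"
proof -
  assume s: "\<sigma> \<in> S"
  define n where "n = norm (ps (ps g) t \<sigma>)"
  define x where "x = inner (ps (ps g) t \<sigma>) (ps (ps (ps g)) t \<sigma>)"
  have "n \<noteq> 0"
    using gss_norm_pos[OF s] by (simp add: n_def)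
  then have "x / n * (1 / n) = n * (x / n ^ 3)" "n * (1 / n) = 1" "n * x / n ^ 3 = x / (n * n)"
    by (simp_all add: power3_eq_cube field_simps)
  with \<open>n \<noteq> 0\<close> show ?thesis
    unfolding ps_I1_eq[OF s] I1_eq n_def[symmetric] x_def[symmetric]
    by (simp add: scaleR_diff_right scaleR_scaleR)
qed

lemma gss_norm_has_derivative: "\<sigma> \<in> S \<Longrightarrow> ((\<lambda>\<sigma>. norm (ps (ps g) t \<sigma>)) has_vector_derivative
   inner (ps (ps g) t \<sigma>) (ps (ps (ps g)) t \<sigma>) / norm (ps (ps g) t \<sigma>)) (at \<sigma>)"
  using has_real_derivative_norm[OF gss_has_derivative gss_nonzero]
  by (simp add: has_real_derivative_iff_has_vector_derivative)

text \<open>Coefficients that do not matter in the end are only asserted to exist.\<close>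

lemma gssss_eq:
  assumes s: "\<sigma> \<in> S"
  shows "\<exists>e'. ps (ps (ps (ps g))) t \<sigma> =
    (2 * (inner (ps (ps g) t \<sigma>) (ps (ps (ps g)) t \<sigma>) / norm (ps (ps g) t \<sigma>))) *\<^sub>R ps (I1 g) t \<sigma>
    + e' *\<^sub>R I1 g t \<sigma> + norm (ps (ps g) t \<sigma>) *\<^sub>R ps (ps (I1 g)) t \<sigma>"
proof -
  define e where "e \<sigma> = inner (ps (ps g) t \<sigma>) (ps (ps (ps g)) t \<sigma>) / norm (ps (ps g) t \<sigma>)" for \<sigma>
  have "e differentiable (at \<sigma>)"
    unfolding e_def using gss_norm_pos[OF s]
    by (intro differentiable_divide differentiable_inner gss_norm_differentiable[OF s]
        differentiableI_vector[OF gss_has_derivative[OF s]]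
        differentiableI_vector[OF gsss_has_derivative[OF s]]) auto
  then have "(e has_vector_derivative vector_derivative e (at \<sigma>)) (at \<sigma>)"
    using vector_derivative_works by blast
  then have d: "((\<lambda>\<sigma>. e \<sigma> *\<^sub>R I1 g t \<sigma> + norm (ps (ps g) t \<sigma>) *\<^sub>R ps (I1 g) t \<sigma>) has_vector_derivative
      (e \<sigma> *\<^sub>R ps (I1 g) t \<sigma> + vector_derivative e (at \<sigma>) *\<^sub>R I1 g t \<sigma>)
      + (norm (ps (ps g) t \<sigma>) *\<^sub>R ps (ps (I1 g)) t \<sigma> + e \<sigma> *\<^sub>R ps (I1 g) t \<sigma>)) (at \<sigma>)"
    using gss_norm_has_derivative[OF s, folded e_def] I1_has_derivative[OF s] ps_I1_has_derivative[OF s]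
    by (intro has_vector_derivative_add has_vector_derivative_scaleR)
      (simp_all add: has_real_derivative_iff_has_vector_derivative)
  have gsss: "\<And>\<sigma>. \<sigma> \<in> S \<Longrightarrow>
      ps (ps (ps g)) t \<sigma> = e \<sigma> *\<^sub>R I1 g t \<sigma> + norm (ps (ps g) t \<sigma>) *\<^sub>R ps (I1 g) t \<sigma>"
    unfolding e_def by (rule gsss_eq)
  have "ps (ps (ps (ps g))) t \<sigma> = (e \<sigma> *\<^sub>R ps (I1 g) t \<sigma> + vector_derivative e (at \<sigma>) *\<^sub>R I1 g t \<sigma>)
      + (norm (ps (ps g) t \<sigma>) *\<^sub>R ps (ps (I1 g)) t \<sigma> + e \<sigma> *\<^sub>R ps (I1 g) t \<sigma>)"
    by (rule has_vector_derivative_eq_on_open[OF S(1) s gsss gsss_has_derivative[OF s] d])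
  moreover have "(2 * e \<sigma>) *\<^sub>R ps (I1 g) t \<sigma> = e \<sigma> *\<^sub>R ps (I1 g) t \<sigma> + e \<sigma> *\<^sub>R ps (I1 g) t \<sigma>"
    by (metis scaleR_2 scaleR_scaleR)
  ultimately show ?thesis
    unfolding e_def[symmetric]
    by (intro exI[of _ "vector_derivative e (at \<sigma>)"]) (simp add: algebra_simps)
qed

lemma ps_ps_I1_eq:
  assumes s: "\<sigma> \<in> S"
  shows "\<exists>\<kappa>' \<nu> \<rho>'. ps (ps (I1 g)) t \<sigma> = kappa2 g t \<sigma> *\<^sub>R ps (I2 g) t \<sigma> + \<kappa>' *\<^sub>R I2 g t \<sigma>
    - norm (ps (ps g) t \<sigma>) *\<^sub>R ps (ps g) t \<sigma> + \<nu> *\<^sub>R ps g t \<sigma>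
    + rho1 g t \<sigma> *\<^sub>R ps (I5 g) t \<sigma> + \<rho>' *\<^sub>R I5 g t \<sigma>"
proof -
  define \<kappa> where "\<kappa> = kappa2 g t"
  define n where "n = (\<lambda>\<sigma>. norm (ps (ps g) t \<sigma>))"
  define \<rho> where "\<rho> = rho1 g t"
  have "\<rho> = (\<lambda>\<sigma>. inner (ps (I1 g) t \<sigma>) (I5 g t \<sigma>))"
    by (simp add: \<rho>_def fun_eq_iff rho1_def oinner_eq_inner)
  then have "\<rho> differentiable (at \<sigma>)"
    by (simp add: differentiable_inner differentiableI_vector[OF ps_I1_has_derivative[OF s]]
        differentiableI_vector[OF I5_has_derivative[OF s]])
  then have "(\<rho> has_vector_derivative vector_derivative \<rho> (at \<sigma>)) (at \<sigma>)"
    using vector_derivative_works by blast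
  moreover have "(\<kappa> has_vector_derivative vector_derivative \<kappa> (at \<sigma>)) (at \<sigma>)"
    unfolding \<kappa>_def using kappa2_differentiable[OF s] vector_derivative_works by blast
  moreover have "(n has_vector_derivative vector_derivative n (at \<sigma>)) (at \<sigma>)"
    unfolding n_def using gss_norm_differentiable[OF s] vector_derivative_works by blast
  moreover have "((\<lambda>\<sigma>. I5 g t \<sigma>) has_vector_derivative ps (I5 g) t \<sigma>) (at \<sigma>)"
    using I5_has_derivative[OF s] by (simp add: ps_def vector_derivative_at)
  ultimately have d: "((\<lambda>\<sigma>. \<kappa> \<sigma> *\<^sub>R I2 g t \<sigma> - n \<sigma> *\<^sub>R ps g t \<sigma> + \<rho> \<sigma> *\<^sub>R I5 g t \<sigma>) has_vector_derivative
      (\<kappa> \<sigma> *\<^sub>R ps (I2 g) t \<sigma> + vector_derivative \<kappa> (at \<sigma>) *\<^sub>R I2 g t \<sigma>)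
      - (n \<sigma> *\<^sub>R ps (ps g) t \<sigma> + vector_derivative n (at \<sigma>) *\<^sub>R ps g t \<sigma>)
      + (\<rho> \<sigma> *\<^sub>R ps (I5 g) t \<sigma> + vector_derivative \<rho> (at \<sigma>) *\<^sub>R I5 g t \<sigma>)) (at \<sigma>)"
    using I2_has_derivative[OF s] gs_has_derivative[OF s]
    by (intro has_vector_derivative_add has_vector_derivative_diff has_vector_derivative_scaleR)
      (simp_all add: has_real_derivative_iff_has_vector_derivative)
  have frenet: "\<And>\<sigma>. \<sigma> \<in> S \<Longrightarrow>
      ps (I1 g) t \<sigma> = \<kappa> \<sigma> *\<^sub>R I2 g t \<sigma> - n \<sigma> *\<^sub>R ps g t \<sigma> + \<rho> \<sigma> *\<^sub>R I5 g t \<sigma>"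
    unfolding \<kappa>_def n_def \<rho>_def by (rule frenet_I1)
  have "ps (ps (I1 g)) t \<sigma> = (\<kappa> \<sigma> *\<^sub>R ps (I2 g) t \<sigma> + vector_derivative \<kappa> (at \<sigma>) *\<^sub>R I2 g t \<sigma>)
      - (n \<sigma> *\<^sub>R ps (ps g) t \<sigma> + vector_derivative n (at \<sigma>) *\<^sub>R ps g t \<sigma>)
      + (\<rho> \<sigma> *\<^sub>R ps (I5 g) t \<sigma> + vector_derivative \<rho> (at \<sigma>) *\<^sub>R I5 g t \<sigma>)"
    by (rule has_vector_derivative_eq_on_open[OF S(1) s frenet ps_I1_has_derivative[OF s] d])
  then show ?thesis
    by (intro exI[of _ "vector_derivative \<kappa> (at \<sigma>)"] exI[of _ "- vector_derivative n (at \<sigma>)"]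
        exI[of _ "vector_derivative \<rho> (at \<sigma>)"]) (simp add: \<kappa>_def n_def \<rho>_def algebra_simps)
qed

end

section \<open>The rotated frame\<close>

lemma cmod_rr: "cmod (rr g t s) = 1 / sqrt 2"
  by (simp add: rr_def norm_mult norm_divide norm_exp_eq_Re)

lemma cmod_qq: "cmod (qq g t s) = 1 / sqrt 2"
  by (simp add: qq_def norm_mult norm_divide norm_exp_eq_Re)

lemma w2_eq_abs_k1: "w2 g t s = \<bar>k1 g t s\<bar>"
  by (simp add: w2_def phi1_def norm_mult cmod_rr)

lemma cmod_phi2: "cmod (phi2 g t s) = \<bar>kappa2 g t s\<bar>"
  by (simp add: phi2_def norm_mult cmod_rr cmod_qq abs_mult)

lemma phi3_eq_0_imp:
  assumes "phi3 g t s = 0"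
  shows "alpha g t s = 0" and "beta1 g t s + beta2 g t s = 0"
proof -
  have "rr g t s \<noteq> 0" "qq g t s \<noteq> 0"
    using cmod_rr[of g t s] cmod_qq[of g t s] by auto
  then have "complex_of_real (2 * alpha g t s) + \<i> * complex_of_real (beta1 g t s + beta2 g t s) = 0"
    using assms by (simp add: phi3_def)
  then show "alpha g t s = 0" "beta1 g t s + beta2 g t s = 0"
    by (simp_all add: complex_eq_iff)
qed

lemma sin_cos_arccos_normalized:
  fixes h m :: real
  assumes "m > 0"
  shows "sin (arccos (h / sqrt (h\<^sup>2 + m\<^sup>2))) = m / sqrt (h\<^sup>2 + m\<^sup>2)"
    and "cos (arccos (h / sqrt (h\<^sup>2 + m\<^sup>2))) = h / sqrt (h\<^sup>2 + m\<^sup>2)"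
proof -
  define R where "R = sqrt (h\<^sup>2 + m\<^sup>2)"
  have R: "R > 0" "R\<^sup>2 = h\<^sup>2 + m\<^sup>2"
    using assms by (simp_all add: R_def add_nonneg_pos)
  have "\<bar>h\<bar> \<le> R"
    unfolding R_def using real_sqrt_le_mono[of "h\<^sup>2" "h\<^sup>2 + m\<^sup>2"] by simp
  then have bound: "-1 \<le> h / R" "h / R \<le> 1"
    using R by (auto simp: divide_simps abs_le_iff)
  then show "cos (arccos (h / R)) = h / R"
    by (simp add: cos_arccos)
  have "1 - (h / R)\<^sup>2 = (R\<^sup>2 - h\<^sup>2) / R\<^sup>2"
    using R(1) by (simp add: field_simps)
  also have "\<dots> = (m / R)\<^sup>2"
    using R(2) by (simp add: power_divide)
  finally have "1 - (h / R)\<^sup>2 = (m / R)\<^sup>2" .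
  then show "sin (arccos (h / R)) = m / R"
    using bound R assms by (simp add: sin_arccos)
qed

lemma Etil_simps:
  "Etil g 1 = I4 g" "Etil g (Suc 0) = I4 g" "Etil g 2 = (\<lambda>t s. - I5 g t s)" "Etil g 6 = I3 g"
  "Etil g 7 t s = sin (theta g t s) *\<^sub>R I2 g t s + cos (theta g t s) *\<^sub>R I7 g t s"
  by (simp_all add: Etil_def Efr_def)

context binormal_flow
begin

lemma ps_uminus_I5: "\<sigma> \<in> S \<Longrightarrow> ps (\<lambda>t s. - I5 g t s) t \<sigma> = - ps (I5 g) t \<sigma>"
  unfolding ps_def
  using vector_derivative_at[OF I5_has_derivative]
    vector_derivative_at[OF has_vector_derivative_minus[OF I5_has_derivative]]
  by simp

lemma pt_uminus_I5: "\<sigma> \<in> S \<Longrightarrow> pt (\<lambda>t s. - I5 g t s) t \<sigma> = - pt (I5 g) t \<sigma>"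
  unfolding pt_def
  using vector_derivative_at[OF pt_I5] vector_derivative_at[OF has_vector_derivative_minus[OF pt_I5]]
  by simp

lemma frame_derivatives_orthogonal:
  assumes s: "\<sigma> \<in> S" and v: "v \<in> {ps (I4 g) t \<sigma>, ps (I5 g) t \<sigma>, pt (I4 g) t \<sigma>}"
  shows "inner v (I2 g t \<sigma>) = 0 \<and> inner v (I3 g t \<sigma>) = 0 \<and> inner v (I7 g t \<sigma>) = 0"
proof -
  define a b c n where
    a_def: "a = I1 g t \<sigma>"
    and b_def: "b = I2 g t \<sigma>"
    and c_def: "c = ps g t \<sigma>"
    and n_def: "n = norm (ps (ps g) t \<sigma>)"
  interpret special_triple a b c
    using special_triple_at[OF s] by (simp add: a_def b_def c_def)
  have p: "ps (I1 g) t \<sigma> = kappa2 g t \<sigma> *\<^sub>R b - n *\<^sub>R c + rho1 g t \<sigma> *\<^sub>R ocross a c"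
    using frenet_I1[OF s] by (simp add: a_def b_def c_def n_def I5_eq)
  have "ps (I4 g) t \<sigma> = n *\<^sub>R a"
    using gss_eq[OF s] by (simp add: I4_def a_def n_def)
  moreover have "ps (I5 g) t \<sigma> = kappa2 g t \<sigma> *\<^sub>R ocross b c - rho1 g t \<sigma> *\<^sub>R a"
    using frenet_I5[OF s] by (simp add: a_def b_def c_def)
  moreover have "pt (I4 g) t \<sigma>
      = ocross c ((inner (ps (ps g) t \<sigma>) (ps (ps (ps g)) t \<sigma>) / n) *\<^sub>R a + n *\<^sub>R ps (I1 g) t \<sigma>)"
    using pt_gs[OF s] gsss_eq[OF s] by (simp add: I4_def a_def c_def n_def)
  moreover have "I3 g t \<sigma> = ocross a b" "I7 g t \<sigma> = ocross (ocross a b) c"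
    by (simp_all add: I3_def I7_def I4_def a_def b_def c_def)
  ultimately show ?thesis
    using v by (auto simp: p frame_simps simp flip: b_def)
qed

lemma ps_I2_normal_components:
  assumes s: "\<sigma> \<in> S" and phi3: "phi3 g t \<sigma> = 0"
  shows "inner (ps (I2 g) t \<sigma>) (I3 g t \<sigma>) = 0"
    and "inner (ps (I2 g) t \<sigma>) (I7 g t \<sigma>) = - k1 g t \<sigma> / 2"
proof -
  interpret special_triple "I1 g t \<sigma>" "I2 g t \<sigma>" "ps g t \<sigma>"
    by (rule special_triple_at[OF s])
  show "inner (ps (I2 g) t \<sigma>) (I3 g t \<sigma>) = 0"
    using phi3_eq_0_imp(1)[OF phi3] by (simp add: alpha_def oinner_eq_inner)
  show "inner (ps (I2 g) t \<sigma>) (I7 g t \<sigma>) = - k1 g t \<sigma> / 2"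
    using beta_sum_zero_imp_inner_I7[OF ps_I2_ImO[OF s] frenet_I1[OF s, unfolded I5_eq]]
      phi3_eq_0_imp(2)[OF phi3] ps_I3[OF s]
    by (simp add: beta1_def beta2_def oinner_eq_inner I7_def I6_def I3_def I4_def k1_eq_norm)
qed

lemma pt_I5_normal_components:
  assumes s: "\<sigma> \<in> S" and phi3: "phi3 g t \<sigma> = 0"
  shows "inner (pt (I5 g) t \<sigma>) (I3 g t \<sigma>) = 0"
    and "inner (pt (I5 g) t \<sigma>) (I7 g t \<sigma>) = 3/2 * k1 g t \<sigma> * kappa2 g t \<sigma>"
proof -
  define a b c q n \<kappa> \<rho> where
    a_def: "a = I1 g t \<sigma>"
    and b_def: "b = I2 g t \<sigma>"
    and c_def: "c = ps g t \<sigma>"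
    and q_def: "q = ps (I2 g) t \<sigma>"
    and n_def: "n = norm (ps (ps g) t \<sigma>)"
    and \<kappa>_def: "\<kappa> = kappa2 g t \<sigma>"
    and \<rho>_def: "\<rho> = rho1 g t \<sigma>"
  define e where "e = inner (ps (ps g) t \<sigma>) (ps (ps (ps g)) t \<sigma>) / n"
  interpret special_triple a b c
    using special_triple_at[OF s] by (simp add: a_def b_def c_def)
  have n: "n > 0"
    using gss_norm_pos[OF s] by (simp add: n_def)
  have p: "ps (I1 g) t \<sigma> = \<kappa> *\<^sub>R b - n *\<^sub>R c + \<rho> *\<^sub>R ocross a c"
    using frenet_I1[OF s] by (simp add: a_def b_def c_def n_def \<kappa>_def \<rho>_def I5_eq)
  have q: "q \<in> ImO" "inner q b = 0" "inner q (ocross a b) = 0"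
    "inner q (ocross (ocross a b) c) = - n / 2"
    using ps_I2_ImO[OF s] ps_I2_orth_I2[OF s] ps_I2_normal_components[OF s phi3]
    by (simp_all add: q_def b_def a_def c_def n_def I3_def I7_def I4_def k1_eq_norm)
  have C: "ps (ps (ps g)) t \<sigma> = e *\<^sub>R a + n *\<^sub>R ps (I1 g) t \<sigma>"
    using gsss_eq[OF s] by (simp add: e_def a_def n_def)
  obtain \<kappa>' \<nu> \<rho>' where "ps (ps (I1 g)) t \<sigma> = \<kappa> *\<^sub>R q + \<kappa>' *\<^sub>R b
      - n *\<^sub>R ps (ps g) t \<sigma> + \<nu> *\<^sub>R c + \<rho> *\<^sub>R ps (I5 g) t \<sigma> + \<rho>' *\<^sub>R I5 g t \<sigma>"
    using ps_ps_I1_eq[OF s] by (auto simp: \<kappa>_def q_def b_def n_def c_def \<rho>_def)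
  then have p': "ps (ps (I1 g)) t \<sigma> = \<kappa> *\<^sub>R q + \<kappa>' *\<^sub>R b - n *\<^sub>R (n *\<^sub>R a) + \<nu> *\<^sub>R c
      + \<rho> *\<^sub>R (\<kappa> *\<^sub>R ocross b c - \<rho> *\<^sub>R a) + \<rho>' *\<^sub>R ocross a c"
    using gss_eq[OF s] frenet_I5[OF s]
    by (simp add: I5_eq a_def b_def c_def n_def \<kappa>_def \<rho>_def)
  obtain e' where D: "ps (ps (ps (ps g))) t \<sigma> = (2 * e) *\<^sub>R ps (I1 g) t \<sigma> + e' *\<^sub>R a
      + n *\<^sub>R ps (ps (I1 g)) t \<sigma>"
    using gssss_eq[OF s] by (auto simp: e_def a_def n_def)
  obtain \<mu> where "pt (I5 g) t \<sigma> = ocross a (pt (ps g) t \<sigma>)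
      + ocross ((1 / n) *\<^sub>R pt (ps (ps g)) t \<sigma> - \<mu> *\<^sub>R ps (ps g) t \<sigma>) c"
    using vector_derivative_at[OF pt_I5[OF s]] by (auto simp: pt_def a_def c_def n_def)
  then have "pt (I5 g) t \<sigma> = ocross a (ocross c (ps (ps (ps g)) t \<sigma>))
      + ocross ((1 / n) *\<^sub>R (ocross c (ps (ps (ps (ps g))) t \<sigma>) + ocross (n *\<^sub>R a) (ps (ps (ps g)) t \<sigma>))
        - \<mu> *\<^sub>R (n *\<^sub>R a)) c"
    using pt_gs[OF s] pt_gss[OF s] gss_eq[OF s] by (simp add: a_def c_def n_def)
  from pt_I5_algebra[OF q n p C p' D this]
  show "inner (pt (I5 g) t \<sigma>) (I3 g t \<sigma>) = 0"
    and "inner (pt (I5 g) t \<sigma>) (I7 g t \<sigma>) = 3/2 * k1 g t \<sigma> * kappa2 g t \<sigma>"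
    by (simp_all add: I3_def I7_def I4_def a_def b_def c_def k1_eq_norm n_def \<kappa>_def)
qed

lemma hcoef_Etil_normal_vanish:
  assumes s: "\<sigma> \<in> S" and phi3: "phi3 g t \<sigma> = 0"
  shows "\<forall>i\<in>{1,2}. \<forall>j\<in>{1,2}. hcoef g (Etil g) 6 i j t \<sigma> = 0 \<and> hcoef g (Etil g) 7 i j t \<sigma> = 0"
proof -
  define V n \<kappa> where
    V_def: "V = pt (I5 g) t \<sigma>"
    and n_def: "n = k1 g t \<sigma>"
    and \<kappa>_def: "\<kappa> = kappa2 g t \<sigma>"
  have n: "n > 0" and \<kappa>: "\<kappa> > 0"
    using k1pos k2pos tT s by (auto simp: n_def \<kappa>_def)
  have w2: "w2 g t \<sigma> = n"
    using n by (simp add: w2_eq_abs_k1 n_def)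
  have V: "inner V (I3 g t \<sigma>) = 0" "inner V (I7 g t \<sigma>) = 3/2 * n * \<kappa>"
    using pt_I5_normal_components[OF s phi3] by (simp_all add: V_def n_def \<kappa>_def)
  define h where "h = - inner V (I2 g t \<sigma>) / n"
  have "theta g t \<sigma> = arccos (h / sqrt (h\<^sup>2 + (3/2 * \<kappa>)\<^sup>2))"
    using \<kappa> by (simp add: theta_def hcoef_def Efr_def pt_uminus_I5[OF s] w2 oinner_eq_inner cmod_phi2
        power_mult_distrib power_divide h_def V_def \<kappa>_def)
  then have rotated: "sin (theta g t \<sigma>) * inner V (I2 g t \<sigma>) + cos (theta g t \<sigma>) * inner V (I7 g t \<sigma>) = 0"
    using sin_cos_arccos_normalized[of "3/2 * \<kappa>" h] n \<kappa> by (simp add: V h_def field_simps)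
  have orth: "inner v (I2 g t \<sigma>) = 0" "inner v (I3 g t \<sigma>) = 0" "inner v (I7 g t \<sigma>) = 0"
    if "v \<in> {ps (I4 g) t \<sigma>, ps (I5 g) t \<sigma>, pt (I4 g) t \<sigma>}" for v
    using frame_derivatives_orthogonal[OF s that] by simp_all
  show ?thesis
    using V rotated n
    by (auto simp: orth hcoef_def Etil_simps oinner_eq_inner w2 ps_uminus_I5[OF s] pt_uminus_I5[OF s]
        inner_add_right V_def)
qed

end

theorem proposition4:
  fixes g :: "real \<Rightarrow> real \<Rightarrow> oct" and T S :: "real set"
  assumes T: "open T" "is_interval T" "T \<noteq> {}"
      and S: "open S" "is_interval S" "0 \<in> S"
      and smooth: "smooth2_on (T \<times> S) g"
      and im: "\<forall>t\<in>T. \<forall>s\<in>S. g t s \<in> ImO"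
      and eq: "\<forall>t\<in>T. \<forall>s\<in>S. pt g t s = ocross (ps g t s) (ps (ps g) t s)"
      and unit: "\<forall>t\<in>T. \<forall>s\<in>S. onorm (ps g t s) = 1"
      and k1pos: "\<forall>t\<in>T. \<forall>s\<in>S. k1 g t s > 0"
      and k2pos: "\<forall>t\<in>T. \<forall>s\<in>S. kappa2 g t s > 0"
      and phi3: "\<forall>t\<in>T. \<forall>s\<in>S. phi3 g t s = 0"
      and phi2: "\<forall>t\<in>T. \<forall>s\<in>S. phi2 g t s \<noteq> 0"
  shows "\<forall>t\<in>T. \<forall>s\<in>S. \<forall>i\<in>{1,2}. \<forall>j\<in>{1,2}.
           hcoef g (Etil g) 6 i j t s = 0 \<and> hcoef g (Etil g) 7 i j t s = 0"
proof (intro ballI)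
  fix t s and i j :: nat
  assume t: "t \<in> T" and s: "s \<in> S" and ij: "i \<in> {1,2}" "j \<in> {1,2}"
  interpret binormal_flow g T S t
    using T(1) S(1,2) smooth im eq unit k1pos k2pos t by unfold_locales auto
  show "hcoef g (Etil g) 6 i j t s = 0 \<and> hcoef g (Etil g) 7 i j t s = 0"
    using hcoef_Etil_normal_vanish[OF s] phi3 t s ij by blast
qed

end
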